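(* For $p\in\mathbb N$: $R(\mathcal K^I_p)=R(\mathcal K^{II}_p)=1$ if $p=1$ and $=0$ if $p\ge2$. For $p\ge2$: $R(\mathcal H_p)=-2$ if $p=2$ and $R(\mathcal H_p)=0$ if $p\ge3$.
   Context: Here $k=p$. Special graphs (on vertices $j_1,\dots,j_{2p}$ (distinct), $u_0$, $v_0$, with $v_0\notin J=\{j_1,\dots,j_{2p}\}$): $\mathcal H_p$ ($p\ge2$): $u_0=j_1$; edges $j_1j_2$, $j_1j_3$, $j_4v_0$, and $j_{2q-1}j_{2q}$ for $3\le q\le p$. $\mathcal K^I_p$: $u_0=j_1$; edges $j_2v_0$ and $j_{2q-1}j_{2q}$ for $2\le q\le p$. $\mathcal K^{II}_p$: $u_0\notin J$; edges $j_1u_0$, $j_2v_0$, and $j_{2q-1}j_{2q}$ for $2\le q\le p$. Graph-partition sums: for a multigraph $\mathcal G=(V,\mathcal E)$ and $\mathcal F\subseteq\mathcal E$, $\partial\mathcal F$ is the set of vertices of odd degree in $(V,\mathcal F)$. A partition $\mathscr T$ of $\mathcal G$ consists of: a partition $\mathscr P$ of $J$ into blocks of positive even size; a distinguished block $Q\in\mathscr P$; and pairwise disjoint edge sets $\mathcal E_P$ ($P\in\mathscr P$) and $\mathcal E'_1,\dots,\mathcal E'_{p+1-|\mathscr P|}$ (ordered) with union $\mathcal E$, such that $\partial\mathcal E_P=P$ for $P\ne Q$, $\partial\mathcal E_Q=Q\triangle\{u_0,v_0\}$, $\partial\mathcal E'_i=\emptyset$, and $u_0$ is not connected to $v_0$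 in $(V,\mathcal E_Q\cup\mathcal E'_1)$; $n(\mathscr T)=|\mathscr P|$. $R(\mathcal G)=\sum_{\mathscr T}(-1)^{n(\mathscr T)-1}(n(\mathscr T)-1)!$ over all partitions of $\mathcal G$. *)

theory Defs
  imports Main "HOL-Library.Disjoint_Sets"
begin

text \<open>A multigraph is given by a list of edges; edge labels are the list indices
  0..<length es.  Edge subsets are sets of indices.\<close>

definition deg :: "('v \<times> 'v) list \<Rightarrow> nat set \<Rightarrow> 'v \<Rightarrow> nat" where
  "deg es F v = (\<Sum>e\<in>F. (if fst (es ! e) = v then 1 else 0) + (if snd (es ! e) = v then 1 else 0))"

definition bdry :: "('v \<times> 'v) list \<Rightarrow> nat set \<Rightarrow> 'v set" where
  "bdry es F = {v. odd (deg es F v)}"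

definition conn :: "('v \<times> 'v) list \<Rightarrow> nat set \<Rightarrow> 'v \<Rightarrow> 'v \<Rightarrow> bool" where
  "conn es F x y = (\<lambda>a b. \<exists>e\<in>F. es ! e = (a, b) \<or> es ! e = (b, a))\<^sup>*\<^sup>* x y"

type_synonym 'v gpart = "'v set set \<times> 'v set \<times> ('v set \<Rightarrow> nat set) \<times> (nat \<Rightarrow> nat set)"

text \<open>A partition (PP, Q, EP, E') of the graph; EP and E' are taken extensional
  (empty outside PP resp. {1..p+1-|PP|}) so that each partition is represented once.\<close>
definition is_gpart :: "nat \<Rightarrow> 'v set \<Rightarrow> 'v \<Rightarrow> 'v \<Rightarrow> ('v \<times> 'v) list \<Rightarrow> 'v gpart \<Rightarrow> bool" where
  "is_gpart p J u0 v0 es T \<longleftrightarrow>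
     (case T of (PP, Q, EP, E') \<Rightarrow>
       (let m = p + 1 - card PP in
         partition_on J PP \<and> (\<forall>P\<in>PP. 0 < card P \<and> even (card P)) \<and> Q \<in> PP \<and>
         (\<forall>P. P \<notin> PP \<longrightarrow> EP P = {}) \<and> (\<forall>i. i \<notin> {1..m} \<longrightarrow> E' i = {}) \<and>
         (\<forall>P\<in>PP. \<forall>P'\<in>PP. P \<noteq> P' \<longrightarrow> EP P \<inter> EP P' = {}) \<and>
         (\<forall>i\<in>{1..m}. \<forall>i'\<in>{1..m}. i \<noteq> i' \<longrightarrow> E' i \<inter> E' i' = {}) \<and>
         (\<forall>P\<in>PP. \<forall>i\<in>{1..m}. EP P \<inter> E' i = {}) \<and>
         (\<Union>P\<in>PP. EP P) \<union> (\<Union>i\<in>{1..m}. E' i) = {0..<length es} \<and>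
         (\<forall>P\<in>PP - {Q}. bdry es (EP P) = P) \<and>
         bdry es (EP Q) = (Q - {u0, v0}) \<union> ({u0, v0} - Q) \<and>
         (\<forall>i\<in>{1..m}. bdry es (E' i) = {}) \<and>
         \<not> conn es (EP Q \<union> E' 1) u0 v0))"

definition Rsum :: "nat \<Rightarrow> 'v set \<Rightarrow> 'v \<Rightarrow> 'v \<Rightarrow> ('v \<times> 'v) list \<Rightarrow> int" where
  "Rsum p J u0 v0 es =
     (\<Sum>T\<in>{T. is_gpart p J u0 v0 es T}.
        (-1) ^ (card (fst T) - 1) * int (fact (card (fst T) - 1)))"

text \<open>Edge lists of the special graphs; j 1, ..., j (2p) are the vertices of J.\<close>
definition pairs_from :: "(nat \<Rightarrow> 'v) \<Rightarrow> nat \<Rightarrow> nat \<Rightarrow> ('v \<times> 'v) list" where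
  "pairs_from j a p = map (\<lambda>q. (j (2*q - 1), j (2*q))) [a..<p+1]"

definition H_edges :: "nat \<Rightarrow> (nat \<Rightarrow> 'v) \<Rightarrow> 'v \<Rightarrow> ('v \<times> 'v) list" where
  "H_edges p j v0 = [(j 1, j 2), (j 1, j 3), (j 4, v0)] @ pairs_from j 3 p"

definition KI_edges :: "nat \<Rightarrow> (nat \<Rightarrow> 'v) \<Rightarrow> 'v \<Rightarrow> ('v \<times> 'v) list" where
  "KI_edges p j v0 = [(j 2, v0)] @ pairs_from j 2 p"

definition KII_edges :: "nat \<Rightarrow> (nat \<Rightarrow> 'v) \<Rightarrow> 'v \<Rightarrow> 'v \<Rightarrow> ('v \<times> 'v) list" where
  "KII_edges p j u0 v0 = [(j 1, u0), (j 2, v0)] @ pairs_from j 2 p"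

end

theory Submission
  imports Defs
begin

(* Every edge of K^I_p, K^II_p and H_p has an endpoint in J - {u0, v0} that lies on no other edge.
   Such a private vertex is a boundary vertex of exactly those edge sets containing its edge, so in
   any partition of the graph the cycles E'_i are empty and each edge belongs to the block of its
   private vertex: a partition is determined by the pair (P, Q).  For K^I_p and K^II_p the
   admissible P are precisely the coarsenings of the matching {j1 j2, j3 j4, ...}; for H_p they are
   the coarsenings of one of the three partitions that pair up j1, ..., j4 and match the remaining
   vertices, any two of which have as common coarsenings those of the partition joining
   {j1, ..., j4} into one block.  Summing (-1)^(k-1) (k-1)! over the coarsenings of a partition
   with m blocks gives [m = 1] (the Moebius function of the partition lattice), whence
   R(K) = [p = 1] and, by inclusion-exclusion, R(H_p) = 0 + 0 + 0 - 3 [p = 2] + [p = 2]. *)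

section \<open>Sums of the weight over partitions\<close>

definition mobius_weight :: "nat \<Rightarrow> int" where
  "mobius_weight k = (-1) ^ (k - 1) * int (fact (k - 1))"

lemma mobius_weight_Suc: "1 \<le> k \<Longrightarrow> mobius_weight (Suc k) = - int k * mobius_weight k"
  by (cases k) (simp_all add: mobius_weight_def algebra_simps)

definition block_of :: "'a set set \<Rightarrow> 'a \<Rightarrow> 'a set" where
  "block_of PP x = (THE P. P \<in> PP \<and> x \<in> P)"

lemma partition_on_block_unique:
  assumes "partition_on A PP" "P \<in> PP" "P' \<in> PP" "x \<in> P" "x \<in> P'"
  shows "P = P'"
  using assms unfolding partition_on_def disjoint_def by blast

lemma block_of:
  assumes "partition_on A PP" "x \<in> A"
  shows "block_of PP x \<in> PP" "x \<in> block_of PP x"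
proof -
  have "\<exists>!P. P \<in> PP \<and> x \<in> P"
    using assms partition_on_block_unique[OF assms(1)] partition_onD1[OF assms(1)] by blast
  from theI'[OF this] show "block_of PP x \<in> PP" "x \<in> block_of PP x"
    unfolding block_of_def by auto
qed

lemma block_of_eq:
  assumes "partition_on A PP" "P \<in> PP" "x \<in> P"
  shows "block_of PP x = P"
  using assms block_of[OF assms(1)] partition_on_block_unique[OF assms(1)]
  by (metis partition_onD1 UnionI)

lemma block_of_eq_iff:
  assumes "partition_on X PP" "x \<in> X" "y \<in> X"
  shows "block_of PP x = block_of PP y \<longleftrightarrow> (\<exists>P\<in>PP. {x, y} \<subseteq> P)"
proof
  assume "block_of PP x = block_of PP y"
  then show "\<exists>P\<in>PP. {x, y} \<subseteq> P" using block_of[OF assms(1,2)] block_of[OF assms(1,3)] by auto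
next
  assume "\<exists>P\<in>PP. {x, y} \<subseteq> P"
  then obtain P where "P \<in> PP" "x \<in> P" "y \<in> P" by blast
  then show "block_of PP x = block_of PP y" using block_of_eq[OF assms(1)] by metis
qed

lemma mem_iff_block_of_eq:
  assumes "partition_on X PP" "x \<in> X" "P \<in> PP"
  shows "x \<in> P \<longleftrightarrow> block_of PP x = P"
  using block_of[OF assms(1,2)] block_of_eq[OF assms(1,3)] by metis

lemma partition_on_same_block:
  assumes "partition_on X PP" "P' \<in> PP" "u \<subseteq> P'" "x \<in> u" "y \<in> u" "P \<in> PP"
  shows "x \<in> P \<longleftrightarrow> y \<in> P"
proof -
  have "P = P'" if "z \<in> P" "z \<in> u" for z
    using partition_on_block_unique[OF assms(1,6,2) that(1)] that(2) assms(3) by blast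
  then show ?thesis using assms(3-5) by blast
qed

lemma partition_on_Diff_block:
  assumes "partition_on A \<pi>" "B \<in> \<pi>"
  shows "partition_on (A - B) (\<pi> - {B})"
proof -
  have "disjnt B (\<Union> (\<pi> - {B}))"
    using assms unfolding partition_on_def disjoint_def disjnt_def by blast
  moreover have "insert B (\<pi> - {B}) = \<pi>" using assms(2) by blast
  ultimately show ?thesis using assms(1) partition_on_insert by metis
qed

definition insert_point :: "'a \<Rightarrow> 'a set set \<times> 'a set option \<Rightarrow> 'a set set" where
  "insert_point x = (\<lambda>(\<pi>, oc). case oc of None \<Rightarrow> insert {x} \<pi>
                                   | Some B \<Rightarrow> insert (insert x B) (\<pi> - {B}))"

definition remove_point :: "'a \<Rightarrow> 'a set set \<Rightarrow> 'a set set \<times> 'a set option" where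
  "remove_point x \<rho> = (let C = block_of \<rho> x in
     if C = {x} then (\<rho> - {C}, None) else (insert (C - {x}) (\<rho> - {C}), Some (C - {x})))"

lemma insert_point_partition:
  assumes "partition_on S \<pi>" "x \<notin> S" "oc \<in> insert None (Some ` \<pi>)"
  shows "partition_on (insert x S) (insert_point x (\<pi>, oc))"
    and "remove_point x (insert_point x (\<pi>, oc)) = (\<pi>, oc)"
proof -
  have x_notin: "\<And>B. B \<in> \<pi> \<Longrightarrow> x \<notin> B" using assms(1,2) partition_onD1 by blast
  have "partition_on (insert x S) (insert_point x (\<pi>, oc)) \<and>
    remove_point x (insert_point x (\<pi>, oc)) = (\<pi>, oc)"
  proof (cases oc)
    case None
    have P: "partition_on (insert x S) (insert {x} \<pi>)"
      using assms(1,2) x_notin by (subst partition_on_insert) (auto simp: disjnt_def)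
    have "{x} \<notin> \<pi>" using x_notin by blast
    then show ?thesis
      using P block_of_eq[OF P, of "{x}" x] by (simp add: None insert_point_def remove_point_def)
  next
    case (Some B)
    with assms(3) have B: "B \<in> \<pi>" by auto
    have "B \<noteq> {}" "B \<subseteq> S" using assms(1) B partition_onD1 partition_onD3 by blast+
    have "disjnt (insert x B) (\<Union> (\<pi> - {B}))"
      using x_notin assms(1) B unfolding partition_on_def disjoint_def disjnt_def by blast
    moreover have "insert x S - insert x B = S - B" using assms(2) by blast
    ultimately have P: "partition_on (insert x S) (insert (insert x B) (\<pi> - {B}))"
      using partition_on_Diff_block[OF assms(1) B] \<open>B \<subseteq> S\<close> by (subst partition_on_insert) auto
    have "insert x B \<noteq> {x}" "insert x B - {x} = B" "insert x B \<notin> \<pi>"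
      using \<open>B \<noteq> {}\<close> x_notin[OF B] x_notin by blast+
    then show ?thesis
      using P B block_of_eq[OF P, of "insert x B" x] by (auto simp: Some insert_point_def remove_point_def)
  qed
  then show "partition_on (insert x S) (insert_point x (\<pi>, oc))"
    and "remove_point x (insert_point x (\<pi>, oc)) = (\<pi>, oc)" by auto
qed

lemma remove_point_partition:
  assumes "partition_on (insert x S) \<rho>" "x \<notin> S"
  shows "remove_point x \<rho> \<in> (SIGMA \<pi>:{\<pi>. partition_on S \<pi>}. insert None (Some ` \<pi>))"
    and "insert_point x (remove_point x \<rho>) = \<rho>"
proof -
  define C where "C = block_of \<rho> x"
  have C: "C \<in> \<rho>" "x \<in> C" using block_of[OF assms(1)] unfolding C_def by auto
  have rest: "partition_on (insert x S - C) (\<rho> - {C})"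
    using partition_on_Diff_block[OF assms(1) C(1)] .
  have "remove_point x \<rho> \<in> (SIGMA \<pi>:{\<pi>. partition_on S \<pi>}. insert None (Some ` \<pi>)) \<and>
    insert_point x (remove_point x \<rho>) = \<rho>"
  proof (cases "C = {x}")
    case True
    have "insert x S - C = S" using True assms(2) by blast
    then show ?thesis
      using rest C True by (auto simp: remove_point_def insert_point_def C_def[symmetric])
  next
    case False
    define B where "B = C - {x}"
    have B: "B \<noteq> {}" "insert x B = C" "x \<notin> B" using False C(2) unfolding B_def by blast+
    have "B \<subseteq> S" using C(1) partition_onD1[OF assms(1)] assms(2) unfolding B_def by blast
    have "B \<notin> \<rho>"
      using partition_on_block_unique[OF assms(1) _ C(1)] B unfolding B_def by blast
    have "disjnt B (\<Union> (\<rho> - {C}))"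
      using partition_on_block_unique[OF assms(1) _ C(1)] unfolding B_def disjnt_def by blast
    moreover have "S - B = insert x S - C" using assms(2) B(2) by blast
    ultimately have "partition_on S (insert B (\<rho> - {C}))"
      using rest B(1) \<open>B \<subseteq> S\<close> by (subst partition_on_insert) auto
    moreover have "insert C (insert B (\<rho> - {C}) - {B}) = \<rho>" using C(1) \<open>B \<notin> \<rho>\<close> by blast
    ultimately show ?thesis
      using False B(2) by (simp add: remove_point_def insert_point_def Let_def C_def[symmetric] B_def[symmetric])
  qed
  then show "remove_point x \<rho> \<in> (SIGMA \<pi>:{\<pi>. partition_on S \<pi>}. insert None (Some ` \<pi>))"
    and "insert_point x (remove_point x \<rho>) = \<rho>" by auto
qed

lemma card_insert_point:
  assumes "partition_on S \<pi>" "finite S" "x \<notin> S" "oc \<in> insert None (Some ` \<pi>)"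
  shows "card (insert_point x (\<pi>, oc)) = (if oc = None then Suc (card \<pi>) else card \<pi>)"
proof -
  have fin: "finite \<pi>" using assms(1,2) finite_elements by blast
  have x_notin: "\<And>B. B \<in> \<pi> \<Longrightarrow> x \<notin> B" using assms(1,3) partition_onD1 by blast
  show ?thesis
  proof (cases oc)
    case None
    have "{x} \<notin> \<pi>" using x_notin by blast
    then show ?thesis using fin None by (simp add: insert_point_def)
  next
    case (Some B)
    with assms(4) have "B \<in> \<pi>" by auto
    then have "insert x B \<notin> \<pi> - {B}" "card \<pi> > 0" using x_notin fin card_gt_0_iff by blast+
    then show ?thesis using fin \<open>B \<in> \<pi>\<close> Some by (simp add: insert_point_def card_Diff_singleton)
  qed
qed

lemma sum_mobius_weight_partitions_insert:
  assumes "finite S" "S \<noteq> {}" "x \<notin> S"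
  shows "(\<Sum>\<rho> | partition_on (insert x S) \<rho>. mobius_weight (card \<rho>)) = 0"
proof -
  let ?Sig = "SIGMA \<pi>:{\<pi>. partition_on S \<pi>}. insert None (Some ` \<pi>)"
  have bij: "bij_betw (insert_point x) ?Sig {\<rho>. partition_on (insert x S) \<rho>}"
  proof (rule bij_betw_byWitness[where f' = "remove_point x"])
    show "\<forall>a\<in>?Sig. remove_point x (insert_point x a) = a"
      using insert_point_partition(2)[OF _ assms(3)] by auto
    show "\<forall>\<rho>\<in>{\<rho>. partition_on (insert x S) \<rho>}. insert_point x (remove_point x \<rho>) = \<rho>"
      using remove_point_partition(2)[OF _ assms(3)] by auto
    show "insert_point x ` ?Sig \<subseteq> {\<rho>. partition_on (insert x S) \<rho>}"
      using insert_point_partition(1)[OF _ assms(3)] by auto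
    show "remove_point x ` {\<rho>. partition_on (insert x S) \<rho>} \<subseteq> ?Sig"
      using remove_point_partition(1)[OF _ assms(3)] by blast
  qed
  have block_sum: "(\<Sum>oc\<in>insert None (Some ` \<pi>). mobius_weight (card (insert_point x (\<pi>, oc)))) = 0"
    if "partition_on S \<pi>" for \<pi>
  proof -
    have "finite \<pi>" "\<pi> \<noteq> {}" using that assms(1,2) finite_elements partition_onD1 by auto
    then have "1 \<le> card \<pi>" by (simp add: Suc_le_eq card_gt_0_iff)
    then show ?thesis
      using card_insert_point[OF that assms(1,3)] \<open>finite \<pi>\<close>
      by (simp add: sum.reindex mobius_weight_Suc)
  qed
  have "(\<Sum>\<rho> | partition_on (insert x S) \<rho>. mobius_weight (card \<rho>))
      = (\<Sum>(\<pi>, oc)\<in>?Sig. mobius_weight (card (insert_point x (\<pi>, oc))))"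
    using sum.reindex_bij_betw[OF bij, of "\<lambda>\<rho>. mobius_weight (card \<rho>)"] by (simp add: case_prod_beta')
  also have "\<dots> = (\<Sum>\<pi> | partition_on S \<pi>.
      \<Sum>oc\<in>insert None (Some ` \<pi>). mobius_weight (card (insert_point x (\<pi>, oc))))"
    by (rule sum.Sigma[symmetric])
      (use finitely_many_partition_on[OF assms(1)] finite_elements[OF assms(1)] in auto)
  also have "\<dots> = 0"
    using block_sum by simp
  finally show ?thesis .
qed

lemma sum_mobius_weight_partitions:
  assumes "finite A" "A \<noteq> {}"
  shows "(\<Sum>\<pi> | partition_on A \<pi>. mobius_weight (card \<pi>)) = (if card A = 1 then 1 else 0)"
  using assms
proof (induction A rule: finite_ne_induct)
  case (singleton x)
  have "\<pi> = {{x}}" if "partition_on {x} \<pi>" for \<pi>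
  proof -
    have "B = {x}" if "B \<in> \<pi>" for B
    proof -
      have "B \<subseteq> {x}" "B \<noteq> {}"
        using \<open>partition_on {x} \<pi>\<close> that unfolding partition_on_def by auto
      then show ?thesis by (simp add: subset_singleton_iff)
    qed
    moreover have "\<pi> \<noteq> {}" using \<open>partition_on {x} \<pi>\<close> unfolding partition_on_def by auto
    ultimately show ?thesis by blast
  qed
  then have "{\<pi>. partition_on {x} \<pi>} = {{{x}}}"
    using partition_on_space[of "{x}"] by blast
  then show ?case by (simp add: mobius_weight_def)
next
  case (insert x F)
  have "card (insert x F) \<noteq> 1" using insert card_gt_0_iff by fastforce
  then show ?case using sum_mobius_weight_partitions_insert[OF insert(1,2,3)] by simp
qed

definition subblocks :: "'a set set \<Rightarrow> 'a set \<Rightarrow> 'a set set" where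
  "subblocks U P = {u \<in> U. u \<subseteq> P}"

lemma refines_Union_subblocks:
  assumes "refines J U PP" "P \<in> PP"
  shows "\<Union> (subblocks U P) = P"
  using partition_onD1[OF refines_obtains_subset[OF assms]] unfolding subblocks_def by simp

lemma refines_subblocks_partition:
  assumes "refines J U PP"
  shows "partition_on U (subblocks U ` PP)" and "Union ` subblocks U ` PP = PP"
proof -
  have U: "partition_on J U" and PP: "partition_on J PP" and cover: "\<forall>u\<in>U. \<exists>P\<in>PP. u \<subseteq> P"
    using assms unfolding refines_def by auto
  show "Union ` subblocks U ` PP = PP"
    using refines_Union_subblocks[OF assms] by (simp add: image_image)
  show "partition_on U (subblocks U ` PP)"
  proof (rule partition_onI)
    show "\<Union> (subblocks U ` PP) = U"
      using cover unfolding subblocks_def by auto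
    show "disjnt p q" if p: "p \<in> subblocks U ` PP" and q: "q \<in> subblocks U ` PP" and "p \<noteq> q"
      for p q
    proof -
      obtain P P' where P: "P \<in> PP" "P' \<in> PP" and pq: "p = subblocks U P" "q = subblocks U P'"
        using p q by blast
      have "u \<notin> q" if "u \<in> p" for u
      proof
        assume "u \<in> q"
        have "u \<noteq> {}" using \<open>u \<in> p\<close> partition_onD3[OF U] unfolding pq subblocks_def by auto
        then obtain x where "x \<in> u" by blast
        then have "P = P'"
          using \<open>u \<in> p\<close> \<open>u \<in> q\<close> partition_on_block_unique[OF PP P] unfolding pq subblocks_def by auto
        then show False using \<open>p \<noteq> q\<close> pq by simp
      qed
      then show ?thesis unfolding disjnt_def by auto
    qed
    show "{} \<notin> subblocks U ` PP"
      using refines_Union_subblocks[OF assms] partition_onD3[OF PP] by force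
  qed
qed

lemma partition_of_blocks_refines:
  assumes U: "partition_on J U" and \<pi>: "partition_on U \<pi>"
  shows "refines J U (Union ` \<pi>)" and "inj_on Union \<pi>" and "subblocks U ` Union ` \<pi> = \<pi>"
proof -
  have block_unique: "B = B'"
    if B: "B \<in> \<pi>" "B' \<in> \<pi>" and x: "x \<in> \<Union>B" "x \<in> \<Union>B'" for B B' x
  proof -
    obtain u u' where "u \<in> B" "u' \<in> B'" "x \<in> u" "x \<in> u'" using x by blast
    moreover have "u \<in> U" "u' \<in> U" using B \<open>u \<in> B\<close> \<open>u' \<in> B'\<close> partition_onD1[OF \<pi>] by auto
    ultimately have "u = u'" using partition_on_block_unique[OF U] by blast
    then show ?thesis using partition_on_block_unique[OF \<pi> B] \<open>u \<in> B\<close> \<open>u' \<in> B'\<close> by blast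
  qed
  have nonempty: "\<Union>B \<noteq> {}" if B: "B \<in> \<pi>" for B
  proof -
    have "B \<noteq> {}" using B partition_onD3[OF \<pi>] by auto
    then obtain u where "u \<in> B" by blast
    moreover have "u \<noteq> {}" using \<open>u \<in> B\<close> B partition_onD3[OF U] partition_onD1[OF \<pi>] by auto
    ultimately show ?thesis by blast
  qed
  show "inj_on Union \<pi>"
  proof (rule inj_onI)
    fix B B' assume "B \<in> \<pi>" "B' \<in> \<pi>" "\<Union>B = \<Union>B'"
    then show "B = B'" using block_unique nonempty by (metis ex_in_conv)
  qed
  have "partition_on J (Union ` \<pi>)"
  proof (rule partition_onI)
    show "\<Union> (Union ` \<pi>) = J" using partition_onD1[OF \<pi>] partition_onD1[OF U] by auto
    show "disjnt p q" if "p \<in> Union ` \<pi>" "q \<in> Union ` \<pi>" "p \<noteq> q" for p q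
      using that block_unique unfolding disjnt_def by blast
    show "{} \<notin> Union ` \<pi>" using nonempty by force
  qed
  then show "refines J U (Union ` \<pi>)"
    using U partition_onD1[OF \<pi>] unfolding refines_def by auto
  have "subblocks U (\<Union>B) = B" if B: "B \<in> \<pi>" for B
  proof
    show "B \<subseteq> subblocks U (\<Union>B)" using B partition_onD1[OF \<pi>] unfolding subblocks_def by auto
    show "subblocks U (\<Union>B) \<subseteq> B"
    proof
      fix u assume u: "u \<in> subblocks U (\<Union>B)"
      then obtain B' where "B' \<in> \<pi>" "u \<in> B'" using partition_onD1[OF \<pi>] unfolding subblocks_def by auto
      moreover have "u \<noteq> {}" using u partition_onD3[OF U] unfolding subblocks_def by auto
      then obtain x where "x \<in> u" by blast
      ultimately have "B' = B" using u block_unique[OF _ B, of B' x] unfolding subblocks_def by auto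
      then show "u \<in> B" using \<open>u \<in> B'\<close> by simp
    qed
  qed
  then show "subblocks U ` Union ` \<pi> = \<pi>" by (simp add: image_image)
qed

lemma sum_mobius_weight_coarsenings:
  assumes "partition_on J U" "finite J" "J \<noteq> {}"
  shows "(\<Sum>PP | refines J U PP. mobius_weight (card PP)) = (if card U = 1 then 1 else 0)"
proof -
  have "(\<Sum>PP | refines J U PP. mobius_weight (card PP))
      = (\<Sum>\<pi> | partition_on U \<pi>. mobius_weight (card \<pi>))"
  proof (rule sum.reindex_bij_witness[where i = "image Union" and j = "image (subblocks U)"])
    fix PP assume "PP \<in> {PP. refines J U PP}"
    then have PP: "refines J U PP" by simp
    then show "Union ` subblocks U ` PP = PP" "subblocks U ` PP \<in> {\<pi>. partition_on U \<pi>}"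
      using refines_subblocks_partition[OF PP] by auto
    have "inj_on (subblocks U) PP"
      by (rule inj_on_inverseI[where g = Union]) (use refines_Union_subblocks[OF PP] in blast)
    then show "mobius_weight (card (subblocks U ` PP)) = mobius_weight (card PP)"
      by (simp add: card_image)
  next
    fix \<pi> assume "\<pi> \<in> {\<pi>. partition_on U \<pi>}"
    then show "subblocks U ` Union ` \<pi> = \<pi>" "Union ` \<pi> \<in> {PP. refines J U PP}"
      using partition_of_blocks_refines[OF assms(1)] by auto
  qed
  also have "\<dots> = (if card U = 1 then 1 else 0)"
    using assms partition_onD1[OF assms(1)] finite_UnionD
    by (intro sum_mobius_weight_partitions) auto
  finally show ?thesis .
qed

lemma refines_cover_iff:
  assumes "partition_on X U"
  shows "refines X U PP \<longleftrightarrow> partition_on X PP \<and> (\<forall>u\<in>U. \<exists>P\<in>PP. u \<subseteq> P)"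
  using assms unfolding refines_def by blast

lemma refines_card_pos:
  assumes "refines X U PP" "finite X" "P \<in> PP"
  shows "0 < card P"
proof -
  have "partition_on X PP" using assms(1) unfolding refines_def by blast
  then have "P \<noteq> {}" "P \<subseteq> X" using assms(3) partition_onD1 partition_onD3 by blast+
  then show ?thesis using assms(2) finite_subset card_gt_0_iff by metis
qed

lemma refines_even_card:
  assumes "refines J U PP" "finite J" "\<And>u. u \<in> U \<Longrightarrow> even (card u)" "P \<in> PP"
  shows "even (card P)"
proof -
  have "P \<subseteq> J" using assms(1,4) unfolding refines_def partition_on_def by blast
  then have "finite P" using assms(2) finite_subset by blast
  then have "card P = (\<Sum>u\<in>subblocks U P. card u)"
    using product_partition[OF refines_obtains_subset[OF assms(1,4)]] finite_subset
    unfolding subblocks_def by blast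
  then show ?thesis using assms(3) unfolding subblocks_def by (auto intro!: dvd_sum)
qed

lemma four_blocks_parity_iff:
  assumes "A \<in> S" "B \<in> S" "C \<in> S" "D \<in> S"
  shows "(\<forall>P\<in>S. (A = P \<longleftrightarrow> D = P) \<longleftrightarrow> (B = P \<longleftrightarrow> C = P)) \<longleftrightarrow>
    (A = D \<and> B = C) \<or> (B = D \<and> A = C) \<or> (C = D \<and> A = B)"
proof
  assume H: "\<forall>P\<in>S. (A = P \<longleftrightarrow> D = P) \<longleftrightarrow> (B = P \<longleftrightarrow> C = P)"
  have at_A: "D = A \<longleftrightarrow> (B = A \<longleftrightarrow> C = A)" and at_B: "(A = B \<longleftrightarrow> D = B) \<longleftrightarrow> C = B"
    and at_D: "A = D \<longleftrightarrow> (B = D \<longleftrightarrow> C = D)"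
    using H assms by auto
  show "(A = D \<and> B = C) \<or> (B = D \<and> A = C) \<or> (C = D \<and> A = B)"
  proof (cases "A = D")
    case True
    then show ?thesis using at_B by auto
  next
    case False
    then show ?thesis using at_A at_D by (cases "B = D") auto
  qed
qed auto

section \<open>Boundaries in multigraphs\<close>

definition incident :: "('v \<times> 'v) list \<Rightarrow> 'v \<Rightarrow> nat set" where
  "incident es v = {e. e < length es \<and> (fst (es ! e) = v \<or> snd (es ! e) = v)}"

definition loopless :: "('v \<times> 'v) list \<Rightarrow> bool" where
  "loopless es \<longleftrightarrow> (\<forall>(a, b) \<in> set es. a \<noteq> b)"

lemma bdry_empty [simp]: "bdry es {} = {}"
  by (simp add: bdry_def deg_def)

lemma mem_bdry_iff_odd_incident:
  assumes "loopless es" "F \<subseteq> {..<length es}"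
  shows "v \<in> bdry es F \<longleftrightarrow> odd (card (F \<inter> incident es v))"
proof -
  have "deg es F v = (\<Sum>e\<in>F. if e \<in> incident es v then 1 else 0)"
    unfolding deg_def
  proof (rule sum.cong)
    fix e assume "e \<in> F"
    then have "fst (es ! e) \<noteq> snd (es ! e)"
      using assms nth_mem[of e es] unfolding loopless_def by fastforce
    then show "(if fst (es ! e) = v then 1 else 0) + (if snd (es ! e) = v then 1 else 0)
        = (if e \<in> incident es v then 1 else (0::nat))"
      using \<open>e \<in> F\<close> assms(2) unfolding incident_def by auto
  qed simp
  also have "\<dots> = card (F \<inter> incident es v)"
    using finite_subset[OF assms(2)] by (simp add: sum.If_cases)
  finally show ?thesis unfolding bdry_def by simp
qed

lemma incident_Nil [simp]: "incident [] v = {}"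
  by (simp add: incident_def)

lemma incident_Cons:
  "incident (x # xs) v = (if fst x = v \<or> snd x = v then insert 0 else id) (Suc ` incident xs v)"
  by (auto simp: incident_def nth_Cons' image_iff less_Suc_eq_0_disj split: if_splits)

lemma incident_map_upt:
  "incident (map f [a..<b]) v = (\<lambda>q. q - a) ` {q. a \<le> q \<and> q < b \<and> (fst (f q) = v \<or> snd (f q) = v)}"
proof (rule set_eqI)
  fix e
  have "e \<in> incident (map f [a..<b]) v \<longleftrightarrow> a + e < b \<and> (fst (f (a + e)) = v \<or> snd (f (a + e)) = v)"
    by (auto simp: incident_def)
  also have "\<dots> \<longleftrightarrow> e \<in> (\<lambda>q. q - a) ` {q. a \<le> q \<and> q < b \<and> (fst (f q) = v \<or> snd (f q) = v)}"
  proof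
    assume "a + e < b \<and> (fst (f (a + e)) = v \<or> snd (f (a + e)) = v)"
    then show "e \<in> (\<lambda>q. q - a) ` {q. a \<le> q \<and> q < b \<and> (fst (f q) = v \<or> snd (f q) = v)}"
      by (intro image_eqI[where x = "a + e"]) auto
  qed auto
  finally show "e \<in> incident (map f [a..<b]) v \<longleftrightarrow> e \<in> (\<lambda>q. q - a) ` {q. a \<le> q \<and> q < b \<and> (fst (f q) = v \<or> snd (f q) = v)}" .
qed

lemma loopless_Cons [simp]: "loopless (x # xs) \<longleftrightarrow> fst x \<noteq> snd x \<and> loopless xs"
  by (cases x) (simp add: loopless_def)

lemma conn_imp_same_side:
  assumes "conn es F x y" "\<And>e. e \<in> F \<Longrightarrow> fst (es ! e) \<in> S \<longleftrightarrow> snd (es ! e) \<in> S"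
  shows "x \<in> S \<longleftrightarrow> y \<in> S"
  using assms(1) unfolding conn_def
proof (induction rule: rtranclp_induct)
  case (step y z)
  then obtain e where "e \<in> F" "es ! e = (y, z) \<or> es ! e = (z, y)" by blast
  then show ?case using step.IH assms(2)[of e] by auto
qed simp

lemma not_conn_across_isolated_edge:
  assumes "incident es a = {e}" "incident es b = {e}" "es ! e = (a, b)"
    and "x \<in> {a, b} \<longleftrightarrow> y \<notin> {a, b}" "F \<subseteq> {..<length es}"
  shows "\<not> conn es F x y"
proof
  assume "conn es F x y"
  moreover have "fst (es ! e') \<in> {a, b} \<longleftrightarrow> snd (es ! e') \<in> {a, b}" if "e' \<in> F" for e'
  proof (cases "e' = e")
    case False
    then have "e' \<notin> incident es a" "e' \<notin> incident es b" using assms(1,2) by auto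
    then show ?thesis using that assms(5) unfolding incident_def by auto
  qed (simp add: assms(3))
  ultimately show False using conn_imp_same_side[of es F x y "{a, b}"] assms(4) by blast
qed

section \<open>Graphs whose edges have private vertices\<close>

locale private_vertices =
  fixes J :: "'v set" and u0 v0 :: 'v and es :: "('v \<times> 'v) list" and pv :: "nat \<Rightarrow> 'v"
  assumes loopless: "loopless es"
    and pv_in: "\<And>e. e < length es \<Longrightarrow> pv e \<in> J"
    and pv_not_root: "\<And>e. e < length es \<Longrightarrow> pv e \<noteq> u0 \<and> pv e \<noteq> v0"
    and incident_pv: "\<And>e. e < length es \<Longrightarrow> incident es (pv e) = {e}"
begin

definition block_edges :: "'v set \<Rightarrow> nat set" where
  "block_edges P = {e. e < length es \<and> pv e \<in> P}"

lemma block_edges_subset: "block_edges P \<subseteq> {..<length es}"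
  unfolding block_edges_def by auto

lemma pv_mem_bdry_iff:
  assumes "F \<subseteq> {..<length es}" "e < length es"
  shows "pv e \<in> bdry es F \<longleftrightarrow> e \<in> F"
  using mem_bdry_iff_odd_incident[OF loopless assms(1)] incident_pv[OF assms(2)]
  by (cases "e \<in> F") auto

lemma mem_bdry_block_edges_iff:
  "v \<in> bdry es (block_edges P) \<longleftrightarrow> odd (card {e \<in> incident es v. pv e \<in> P})"
proof -
  have "block_edges P \<inter> incident es v = {e \<in> incident es v. pv e \<in> P}"
    unfolding block_edges_def incident_def by blast
  moreover have "block_edges P \<subseteq> {..<length es}" unfolding block_edges_def by auto
  ultimately show ?thesis using mem_bdry_iff_odd_incident[OF loopless] by metis
qed

lemma mem_bdry_block_edges_single:
  assumes "incident es v = {e}"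
  shows "v \<in> bdry es (block_edges P) \<longleftrightarrow> pv e \<in> P"
proof -
  have "{e' \<in> incident es v. pv e' \<in> P} = (if pv e \<in> P then {e} else {})" using assms by auto
  then show ?thesis by (simp add: mem_bdry_block_edges_iff)
qed

lemma mem_bdry_block_edges_empty: "incident es v = {} \<Longrightarrow> v \<notin> bdry es (block_edges P)"
  by (simp add: mem_bdry_block_edges_iff)

definition admissible :: "'v set set \<Rightarrow> 'v set \<Rightarrow> bool" where
  "admissible PP Q \<longleftrightarrow> partition_on J PP \<and> (\<forall>P\<in>PP. 0 < card P \<and> even (card P)) \<and> Q \<in> PP \<and>
     (\<forall>P\<in>PP - {Q}. bdry es (block_edges P) = P) \<and>
     bdry es (block_edges Q) = (Q - {u0, v0}) \<union> ({u0, v0} - Q) \<and>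
     \<not> conn es (block_edges Q) u0 v0"

lemma admissible_bdry_blocks:
  assumes "admissible PP Q"
  shows "\<And>P. P \<in> PP \<Longrightarrow> P \<noteq> Q \<Longrightarrow> bdry es (block_edges P) = P"
    and "bdry es (block_edges Q) = (Q - {u0, v0}) \<union> ({u0, v0} - Q)"
  using assms unfolding admissible_def by simp_all

lemma admissible_mem_bdry_imp_mem:
  assumes "admissible PP Q" "P \<in> PP" "v \<in> bdry es (block_edges P)" "v \<noteq> u0" "v \<noteq> v0"
  shows "v \<in> P"
proof (cases "P = Q")
  case True
  then show ?thesis using admissible_bdry_blocks(2)[OF assms(1)] assms(3-5) by blast
next
  case False
  then show ?thesis using admissible_bdry_blocks(1)[OF assms(1,2)] assms(3) by blast
qed

lemma admissible_mem_bdry_outside: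
  assumes "admissible PP Q" "P \<in> PP" "v \<in> bdry es (block_edges P)" "v \<notin> J"
  shows "P = Q"
proof (rule ccontr)
  assume "P \<noteq> Q"
  then have "v \<in> P" using admissible_bdry_blocks(1)[OF assms(1,2)] assms(3) by blast
  moreover have "partition_on J PP" using assms(1) unfolding admissible_def by simp
  then have "P \<subseteq> J" using assms(2) partition_onD1 by blast
  ultimately show False using assms(4) by blast
qed

lemma admissibleI:
  assumes ref: "refines J U PP" and "finite J" "\<And>u. u \<in> U \<Longrightarrow> even (card u)" "Q \<in> PP"
    and "\<And>P. P \<in> PP \<Longrightarrow> P \<noteq> Q \<Longrightarrow> bdry es (block_edges P) = P"
    and "bdry es (block_edges Q) = (Q - {u0, v0}) \<union> ({u0, v0} - Q)"
    and "\<not> conn es (block_edges Q) u0 v0"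
  shows "admissible PP Q"
  unfolding admissible_def
proof (intro conjI ballI)
  show "partition_on J PP" using ref unfolding refines_def by blast
  fix P assume "P \<in> PP"
  show "0 < card P" using refines_card_pos[OF ref assms(2) \<open>P \<in> PP\<close>] .
  show "even (card P)" using refines_even_card[OF ref assms(2,3) \<open>P \<in> PP\<close>] .
next
  fix P assume "P \<in> PP - {Q}"
  then show "bdry es (block_edges P) = P" using assms(5) by blast
qed (use assms(4,6,7) in simp_all)

definition edge_blocks :: "'v set set \<Rightarrow> 'v set \<Rightarrow> nat set" where
  "edge_blocks PP P = (if P \<in> PP then block_edges P else {})"

lemma is_gpart_edge_sets:
  assumes "is_gpart p J u0 v0 es (PP, Q, EP, E')"
  shows "E' = (\<lambda>_. {})" and "EP = edge_blocks PP"
proof -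
  define m where "m = p + 1 - card PP"
  note G = assms[unfolded is_gpart_def prod.case Let_def, folded m_def]
  have part: "partition_on J PP"
    and EP_out: "\<And>P. P \<notin> PP \<Longrightarrow> EP P = {}" and E'_out: "\<And>i. i \<notin> {1..m} \<Longrightarrow> E' i = {}"
    and cov: "(\<Union>P\<in>PP. EP P) \<union> (\<Union>i\<in>{1..m}. E' i) = {..<length es}"
    and bdry_P: "\<And>P. P \<in> PP - {Q} \<Longrightarrow> bdry es (EP P) = P"
    and bdry_Q: "bdry es (EP Q) = (Q - {u0, v0}) \<union> ({u0, v0} - Q)"
    and bdry_E': "\<And>i. i \<in> {1..m} \<Longrightarrow> bdry es (E' i) = {}"
    using G by (simp_all add: atLeast0LessThan)
  have EP_sub: "EP P \<subseteq> {..<length es}" if "P \<in> PP" for P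
    using cov that by blast
  have E'_sub: "E' i \<subseteq> {..<length es}" if "i \<in> {1..m}" for i
    using cov that by blast
  show E'_empty: "E' = (\<lambda>_. {})"
  proof
    fix i
    show "E' i = {}"
    proof (cases "i \<in> {1..m}")
      case True
      then show ?thesis using pv_mem_bdry_iff[OF E'_sub[OF True]] E'_sub[OF True] bdry_E'[OF True]
        by blast
    qed (use E'_out in simp)
  qed
  have pv_in_block: "pv e \<in> P" if P: "P \<in> PP" and e: "e \<in> EP P" for P e
  proof -
    have "e < length es" using EP_sub[OF P] e by blast
    then have "pv e \<in> bdry es (EP P)" using pv_mem_bdry_iff[OF EP_sub[OF P]] e by blast
    then show ?thesis using bdry_P[of P] bdry_Q pv_not_root[OF \<open>e < length es\<close>] P
      by (cases "P = Q") auto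
  qed
  have EP_block: "EP P = block_edges P" if P: "P \<in> PP" for P
  proof (intro set_eqI iffI)
    fix e assume "e \<in> EP P"
    then show "e \<in> block_edges P" using pv_in_block[OF P] EP_sub[OF P] unfolding block_edges_def by blast
  next
    fix e assume "e \<in> block_edges P"
    then have "e < length es" "pv e \<in> P" unfolding block_edges_def by auto
    then obtain P' where "P' \<in> PP" "e \<in> EP P'" using cov E'_empty by auto
    moreover have "P' = P"
      using partition_on_block_unique[OF part \<open>P' \<in> PP\<close> P] pv_in_block calculation \<open>pv e \<in> P\<close> by blast
    ultimately show "e \<in> EP P" by simp
  qed
  show "EP = edge_blocks PP"
    using EP_block EP_out unfolding edge_blocks_def by (intro ext) simp
qed

lemma is_gpart_iff:
  "is_gpart p J u0 v0 es T \<longleftrightarrow> (\<exists>PP Q. T = (PP, Q, edge_blocks PP, \<lambda>_. {}) \<and> admissible PP Q)"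
proof
  assume G: "is_gpart p J u0 v0 es T"
  obtain PP Q EP E' where T: "T = (PP, Q, EP, E')" by (cases T)
  have E': "E' = (\<lambda>_. {})" and EP: "EP = edge_blocks PP"
    using is_gpart_edge_sets G unfolding T by blast+
  have "partition_on J PP" "\<forall>P\<in>PP. 0 < card P \<and> even (card P)" "Q \<in> PP"
    "\<forall>P\<in>PP - {Q}. bdry es (EP P) = P" "bdry es (EP Q) = (Q - {u0, v0}) \<union> ({u0, v0} - Q)"
    "\<not> conn es (EP Q \<union> E' 1) u0 v0"
    using G unfolding T is_gpart_def prod.case Let_def by simp_all
  then have "admissible PP Q"
    unfolding admissible_def by (simp add: E' EP edge_blocks_def)
  then show "\<exists>PP Q. T = (PP, Q, edge_blocks PP, \<lambda>_. {}) \<and> admissible PP Q"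
    using T E' EP by blast
next
  assume "\<exists>PP Q. T = (PP, Q, edge_blocks PP, \<lambda>_. {}) \<and> admissible PP Q"
  then obtain PP Q where T: "T = (PP, Q, edge_blocks PP, \<lambda>_. {})" and A: "admissible PP Q"
    by blast
  have part: "partition_on J PP" and ev: "\<forall>P\<in>PP. 0 < card P \<and> even (card P)" and "Q \<in> PP"
    and bdry_P: "\<forall>P\<in>PP - {Q}. bdry es (edge_blocks PP P) = P"
    and bdry_Q: "bdry es (edge_blocks PP Q) = (Q - {u0, v0}) \<union> ({u0, v0} - Q)"
    and nc: "\<not> conn es (edge_blocks PP Q) u0 v0"
    using A unfolding admissible_def edge_blocks_def by auto
  have cov: "(\<Union>P\<in>PP. edge_blocks PP P) = {0..<length es}"
  proof -
    have "\<exists>P\<in>PP. pv e \<in> P" if "e < length es" for e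
      using pv_in[OF that] partition_onD1[OF part] by blast
    then show ?thesis unfolding edge_blocks_def block_edges_def by auto
  qed
  have disj: "\<forall>P\<in>PP. \<forall>P'\<in>PP. P \<noteq> P' \<longrightarrow> edge_blocks PP P \<inter> edge_blocks PP P' = {}"
  proof (intro ballI impI)
    fix P P' assume "P \<in> PP" "P' \<in> PP" "P \<noteq> P'"
    then show "edge_blocks PP P \<inter> edge_blocks PP P' = {}"
      using partition_on_block_unique[OF part \<open>P \<in> PP\<close> \<open>P' \<in> PP\<close>]
      unfolding edge_blocks_def block_edges_def by auto
  qed
  have out: "\<forall>P. P \<notin> PP \<longrightarrow> edge_blocks PP P = {}"
    unfolding edge_blocks_def by simp
  show "is_gpart p J u0 v0 es T"
    unfolding T is_gpart_def prod.case Let_def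
    using part ev \<open>Q \<in> PP\<close> bdry_P bdry_Q nc cov disj out by simp
qed

lemma Rsum_eq_sum_admissible:
  assumes "\<And>PP Q. admissible PP Q \<longleftrightarrow> PP \<in> C \<and> Q = root PP"
  shows "Rsum p J u0 v0 es = (\<Sum>PP\<in>C. mobius_weight (card PP))"
proof -
  let ?T = "\<lambda>PP. (PP, root PP, edge_blocks PP, \<lambda>_::nat. {} :: nat set)"
  have "{T. is_gpart p J u0 v0 es T} = ?T ` C"
    using is_gpart_iff assms by auto
  moreover have "inj_on ?T C" by (rule inj_onI) simp
  ultimately show ?thesis
    unfolding Rsum_def by (simp add: sum.reindex mobius_weight_def)
qed

end

lemma length_pairs_from [simp]: "length (pairs_from j a p) = p + 1 - a"
  by (simp add: pairs_from_def del: upt_Suc)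

locale vertex_labelling =
  fixes p :: nat and j :: "nat \<Rightarrow> 'v"
  assumes inj: "inj_on j {1..2*p}"
begin

abbreviation J :: "'v set" where "J \<equiv> j ` {1..2*p}"

lemma j_eq_iff: "a \<in> {1..2*p} \<Longrightarrow> b \<in> {1..2*p} \<Longrightarrow> j a = j b \<longleftrightarrow> a = b"
  using inj by (meson inj_on_eq_iff)

lemma j_in_J: "k \<in> {1..2*p} \<Longrightarrow> j k \<in> J"
  by blast

definition pair_block :: "nat \<Rightarrow> 'v set" where
  "pair_block q = {j (2*q - 1), j (2*q)}"

lemma mem_pair_block_iff:
  assumes "k \<in> {1..2*p}" "q \<in> {1..p}"
  shows "j k \<in> pair_block q \<longleftrightarrow> q = (k + 1) div 2"
proof -
  have "2*q - 1 \<in> {1..2*p}" "2*q \<in> {1..2*p}" using assms(2) by auto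
  then have "j k \<in> pair_block q \<longleftrightarrow> k = 2*q - 1 \<or> k = 2*q"
    using assms(1) j_eq_iff unfolding pair_block_def by auto
  also have "\<dots> \<longleftrightarrow> q = (k + 1) div 2" using assms(2) by presburger
  finally show ?thesis .
qed

lemma pair_blocks_containing:
  assumes "k \<in> {1..2*p}" "1 \<le> a"
  shows "{q \<in> {a..p}. j k \<in> pair_block q} = (if a \<le> (k + 1) div 2 then {(k + 1) div 2} else {})"
  using mem_pair_block_iff[OF assms(1)] assms by auto

lemma pair_blocks_containing_outside:
  assumes "v \<notin> J" "1 \<le> a"
  shows "{q \<in> {a..p}. v \<in> pair_block q} = {}"
  using assms unfolding pair_block_def by force

lemma incident_pairs_from:
  "incident (pairs_from j a p) v = (\<lambda>q. q - a) ` {q \<in> {a..p}. v \<in> pair_block q}"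
proof -
  have "{q. a \<le> q \<and> q < p + 1 \<and> (j (2*q - 1) = v \<or> j (2*q) = v)} = {q \<in> {a..p}. v \<in> pair_block q}"
    unfolding pair_block_def by auto
  then show ?thesis unfolding pairs_from_def incident_map_upt by simp
qed

lemma pair_block_distinct:
  assumes "q \<in> {1..p}"
  shows "j (2*q - 1) \<noteq> j (2*q)"
proof -
  have "2*q - 1 \<in> {1..2*p}" "2*q \<in> {1..2*p}" "2*q - 1 \<noteq> 2*q" using assms by auto
  then show ?thesis using j_eq_iff by blast
qed

lemma loopless_pairs_from: "1 \<le> a \<Longrightarrow> loopless (pairs_from j a p)"
  using pair_block_distinct unfolding loopless_def pairs_from_def by auto

lemma card_pair_block: "q \<in> {1..p} \<Longrightarrow> card (pair_block q) = 2"
  using pair_block_distinct unfolding pair_block_def by simp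

lemma pair_block_eqD:
  assumes "q \<in> {1..p}" "q' \<in> {1..p}" "x \<in> pair_block q" "x \<in> pair_block q'"
  shows "q = q'"
proof -
  have "2*q - 1 \<in> {1..2*p}" "2*q \<in> {1..2*p}" using assms(1) by auto
  then obtain k where "k \<in> {1..2*p}" "x = j k"
    using assms(3) unfolding pair_block_def by blast
  then show ?thesis using mem_pair_block_iff assms by blast
qed

lemma partition_on_pair_blocks:
  assumes "1 \<le> a"
  shows "partition_on (j ` {2*a - 1..2*p}) (pair_block ` {a..p})"
proof (rule partition_onI)
  show "\<Union> (pair_block ` {a..p}) = j ` {2*a - 1..2*p}"
  proof (intro equalityI subsetI)
    fix v assume "v \<in> j ` {2*a - 1..2*p}"
    then obtain k where k: "k \<in> {2*a - 1..2*p}" "v = j k" by blast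
    then have q: "(k + 1) div 2 \<in> {a..p}" and "k \<in> {1..2*p}" using assms by auto
    then have "v \<in> pair_block ((k + 1) div 2)" using mem_pair_block_iff k(2) assms by auto
    then show "v \<in> \<Union> (pair_block ` {a..p})" using q by blast
  next
    fix v assume "v \<in> \<Union> (pair_block ` {a..p})"
    then obtain q where "q \<in> {a..p}" "v = j (2*q - 1) \<or> v = j (2*q)"
      unfolding pair_block_def by blast
    moreover have "2*q - 1 \<in> {2*a - 1..2*p}" "2*q \<in> {2*a - 1..2*p}" using calculation(1) by auto
    ultimately show "v \<in> j ` {2*a - 1..2*p}" by blast
  qed
  show "disjnt u u'" if u: "u \<in> pair_block ` {a..p}" and u': "u' \<in> pair_block ` {a..p}"
    and "u \<noteq> u'" for u u'
  proof -
    obtain q q' where "q \<in> {a..p}" "q' \<in> {a..p}" "u = pair_block q" "u' = pair_block q'"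
      using u u' by blast
    then show ?thesis using pair_block_eqD[of q q'] assms \<open>u \<noteq> u'\<close> unfolding disjnt_def by auto
  qed
  show "{} \<notin> pair_block ` {a..p}" unfolding pair_block_def by auto
qed

lemma card_pair_blocks:
  assumes "1 \<le> a"
  shows "card (pair_block ` {a..p}) = p + 1 - a"
proof -
  have "inj_on pair_block {a..p}"
  proof (rule inj_onI)
    fix q q' assume "q \<in> {a..p}" "q' \<in> {a..p}" "pair_block q = pair_block q'"
    then show "q = q'" using pair_block_eqD[of q q' "j (2*q)"] assms unfolding pair_block_def by auto
  qed
  then show ?thesis by (simp add: card_image)
qed

lemma partition_on_pairs: "partition_on J (pair_block ` {1..p})"
  using partition_on_pair_blocks[of 1] by simp

lemma pair_block_same_block:
  assumes "partition_on X PP" "\<exists>P'\<in>PP. pair_block ((k + 1) div 2) \<subseteq> P'" "P \<in> PP" "k \<in> {1..2*p}"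
  shows "j k \<in> P \<longleftrightarrow> j (2 * ((k + 1) div 2)) \<in> P"
proof -
  obtain P' where P': "P' \<in> PP" "pair_block ((k + 1) div 2) \<subseteq> P'" using assms(2) by blast
  have "(k + 1) div 2 \<in> {1..p}" using assms(4) by auto
  then have "j k \<in> pair_block ((k + 1) div 2)" using mem_pair_block_iff[OF assms(4)] by blast
  moreover have "j (2 * ((k + 1) div 2)) \<in> pair_block ((k + 1) div 2)" unfolding pair_block_def by simp
  ultimately show ?thesis using partition_on_same_block[OF assms(1) P' _ _ assms(3)] by blast
qed

lemma refines_pairs_same_block:
  assumes "refines X (pair_block ` {1..p}) PP" "P \<in> PP" "k \<in> {1..2*p}"
  shows "j k \<in> P \<longleftrightarrow> j (2 * ((k + 1) div 2)) \<in> P"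
proof (rule pair_block_same_block[OF _ _ assms(2,3)])
  show "partition_on X PP" using assms(1) unfolding refines_def by blast
  have "(k + 1) div 2 \<in> {1..p}" using assms(3) by auto
  then show "\<exists>P'\<in>PP. pair_block ((k + 1) div 2) \<subseteq> P'" using assms(1) unfolding refines_def by blast
qed

end

section \<open>The graph $\mathcal K^I_p$\<close>

locale KI_graph = vertex_labelling p j for p and j :: "nat \<Rightarrow> 'v" +
  fixes v0 :: 'v
  assumes p_pos: "1 \<le> p" and v0_notin: "v0 \<notin> J"
begin

definition pv :: "nat \<Rightarrow> 'v" where "pv e = j (2*e + 2)"

lemma KI_edges_eq: "KI_edges p j v0 = (j 2, v0) # pairs_from j 2 p"
  by (simp add: KI_edges_def)

lemma length_KI_edges: "length (KI_edges p j v0) = p"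
  using p_pos by (simp add: KI_edges_eq)

lemma incident_KI:
  "incident (KI_edges p j v0) v =
     (if j 2 = v \<or> v0 = v then insert 0 else id) (Suc ` (\<lambda>q. q - 2) ` {q \<in> {2..p}. v \<in> pair_block q})"
  by (simp add: KI_edges_eq incident_Cons incident_pairs_from)

lemma incident_KI_j:
  assumes "k \<in> {1..2*p}"
  shows "incident (KI_edges p j v0) (j k) = (if k = 1 then {} else {(k + 1) div 2 - 1})"
proof -
  have "j k \<noteq> v0" using assms v0_notin by blast
  moreover have "j 2 = j k \<longleftrightarrow> k = 2" using j_eq_iff[of 2 k] assms p_pos by auto
  moreover have "{q \<in> {2..p}. j k \<in> pair_block q} = (if 2 \<le> (k + 1) div 2 then {(k + 1) div 2} else {})"
    using pair_blocks_containing[OF assms] by simp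
  ultimately have incident: "incident (KI_edges p j v0) (j k) =
      (if k = 2 then insert 0 else id) (Suc ` (\<lambda>q. q - 2) ` (if 2 \<le> (k + 1) div 2 then {(k + 1) div 2} else {}))"
    unfolding incident_KI by simp
  consider "k = 1" | "k = 2" | "3 \<le> k" using assms by force
  then show ?thesis
  proof cases
    case 3
    then have "2 \<le> (k + 1) div 2" by simp
    then show ?thesis using 3 unfolding incident by simp
  qed (use incident in simp_all)
qed

lemma incident_KI_v0: "incident (KI_edges p j v0) v0 = {0}"
proof -
  have no_pair: "{q \<in> {2..p}. v0 \<in> pair_block q} = {}"
    by (rule pair_blocks_containing_outside[OF v0_notin]) simp
  show ?thesis unfolding incident_KI no_pair by simp
qed

lemma incident_KI_outside:
  assumes "v \<notin> J" "v \<noteq> v0"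
  shows "incident (KI_edges p j v0) v = {}"
proof -
  have "j 2 \<noteq> v" using assms(1) p_pos by auto
  moreover have "{q \<in> {2..p}. v \<in> pair_block q} = {}" by (rule pair_blocks_containing_outside[OF assms(1)]) simp
  ultimately show ?thesis using assms(2) unfolding incident_KI by simp
qed

sublocale private_vertices J "j 1" v0 "KI_edges p j v0" pv
proof
  show "loopless (KI_edges p j v0)"
    using loopless_pairs_from v0_notin p_pos by (auto simp: KI_edges_eq)
  fix e assume e: "e < length (KI_edges p j v0)"
  then have k: "2*e + 2 \<in> {1..2*p}" using length_KI_edges by auto
  then show "pv e \<in> J" unfolding pv_def by blast
  show "pv e \<noteq> j 1 \<and> pv e \<noteq> v0"
    using k j_eq_iff[of "2*e + 2" 1] v0_notin p_pos unfolding pv_def by auto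
  show "incident (KI_edges p j v0) (pv e) = {e}"
    using incident_KI_j[OF k] unfolding pv_def by simp
qed

lemma bdry_KI_j:
  assumes "k \<in> {1..2*p}"
  shows "j k \<in> bdry (KI_edges p j v0) (block_edges P) \<longleftrightarrow> k \<noteq> 1 \<and> j (2 * ((k + 1) div 2)) \<in> P"
proof (cases "k = 1")
  case False
  have "(2::nat) div 2 \<le> (k + 1) div 2" using assms by (intro div_le_mono) auto
  then have "1 \<le> (k + 1) div 2" by simp
  then have "2 * ((k + 1) div 2 - 1) + 2 = 2 * ((k + 1) div 2)" by arith
  then show ?thesis
    using False incident_KI_j[OF assms] mem_bdry_block_edges_single unfolding pv_def by simp
qed (use incident_KI_j[OF assms] mem_bdry_block_edges_empty in simp)

lemma bdry_KI_v0: "v0 \<in> bdry (KI_edges p j v0) (block_edges P) \<longleftrightarrow> j 2 \<in> P"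
  using mem_bdry_block_edges_single[OF incident_KI_v0] by (simp add: pv_def numeral_2_eq_2)

lemma bdry_KI_outside: "v \<notin> J \<Longrightarrow> v \<noteq> v0 \<Longrightarrow> v \<notin> bdry (KI_edges p j v0) (block_edges P)"
  using incident_KI_outside mem_bdry_block_edges_empty by blast

lemma admissible_KI_refines:
  assumes adm: "admissible PP Q"
  shows "refines J (pair_block ` {1..p}) PP" and "Q = block_of PP (j 1)"
proof -
  have part: "partition_on J PP" and "Q \<in> PP"
    and bdry_Q: "bdry (KI_edges p j v0) (block_edges Q) = (Q - {j 1, v0}) \<union> ({j 1, v0} - Q)"
    using adm unfolding admissible_def by simp_all
  have "j 1 \<in> Q" using bdry_Q bdry_KI_j[of 1 Q] p_pos by auto
  then show "Q = block_of PP (j 1)" using block_of_eq[OF part \<open>Q \<in> PP\<close>] by simp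
  have "\<exists>P\<in>PP. pair_block q \<subseteq> P" if q: "q \<in> {1..p}" for q
  proof -
    have k: "2*q - 1 \<in> {1..2*p}" "2*q \<in> {1..2*p}" using q by auto
    obtain P where P: "P \<in> PP" "j (2*q) \<in> P" using block_of[OF part j_in_J[OF k(2)]] by blast
    show ?thesis
    proof (cases "q = 1")
      case True
      then have "v0 \<in> bdry (KI_edges p j v0) (block_edges P)" using bdry_KI_v0 P(2) by simp
      then have "P = Q" using admissible_mem_bdry_outside[OF adm P(1)] v0_notin by blast
      then show ?thesis using P \<open>j 1 \<in> Q\<close> True unfolding pair_block_def by auto
    next
      case False
      have "(2*q - 1 + 1) div 2 = q" using q by simp
      then have "j (2*q - 1) \<in> bdry (KI_edges p j v0) (block_edges P)"
        using bdry_KI_j[OF k(1)] P(2) False q by simp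
      moreover have "j (2*q - 1) \<noteq> j 1" "j (2*q - 1) \<noteq> v0"
        using j_eq_iff[OF k(1), of 1] j_in_J[OF k(1)] False q v0_notin by auto
      ultimately have "j (2*q - 1) \<in> P" using admissible_mem_bdry_imp_mem[OF adm P(1)] by blast
      then show ?thesis using P unfolding pair_block_def by blast
    qed
  qed
  then show "refines J (pair_block ` {1..p}) PP"
    using refines_cover_iff[OF partition_on_pairs] part by blast
qed

lemma bdry_block_edges_KI:
  assumes ref: "refines J (pair_block ` {1..p}) PP" and P: "P \<in> PP"
  shows "bdry (KI_edges p j v0) (block_edges P) = (P - {j 1}) \<union> (if j 1 \<in> P then {v0} else {})"
proof (rule set_eqI)
  fix v
  have PJ: "P \<subseteq> J" using ref P unfolding refines_def partition_on_def by blast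
  consider "v = v0" | k where "k \<in> {1..2*p}" "v = j k" | "v \<notin> J" "v \<noteq> v0" by blast
  then show "v \<in> bdry (KI_edges p j v0) (block_edges P) \<longleftrightarrow> v \<in> (P - {j 1}) \<union> (if j 1 \<in> P then {v0} else {})"
  proof cases
    case 1
    have "j 1 \<in> P \<longleftrightarrow> j 2 \<in> P" using refines_pairs_same_block[OF ref P, of 1] p_pos by simp
    then show ?thesis using 1 bdry_KI_v0 PJ v0_notin by auto
  next
    case (2 k)
    have "v \<noteq> v0" using 2 v0_notin by blast
    moreover have "j k = j 1 \<longleftrightarrow> k = 1" using j_eq_iff[of k 1] 2(1) p_pos by auto
    ultimately show ?thesis using bdry_KI_j[OF 2(1)] refines_pairs_same_block[OF ref P 2(1)] 2(2) by auto
  next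
    case 3
    then show ?thesis using bdry_KI_outside PJ by auto
  qed
qed

lemma refines_admissible_KI:
  assumes ref: "refines J (pair_block ` {1..p}) PP"
  shows "admissible PP (block_of PP (j 1))"
proof -
  define Q where "Q = block_of PP (j 1)"
  have part: "partition_on J PP" using ref unfolding refines_def by blast
  have "j 1 \<in> J" using p_pos by auto
  then have Q: "Q \<in> PP" "j 1 \<in> Q" using block_of[OF part] unfolding Q_def by auto
  show ?thesis unfolding Q_def[symmetric]
  proof (rule admissibleI[OF ref _ _ Q(1)])
    show "even (card u)" if "u \<in> pair_block ` {1..p}" for u using that card_pair_block by auto
    show "bdry (KI_edges p j v0) (block_edges P) = P" if P: "P \<in> PP" and "P \<noteq> Q" for P
    proof -
      have "j 1 \<notin> P" using mem_iff_block_of_eq[OF part \<open>j 1 \<in> J\<close> P] \<open>P \<noteq> Q\<close> unfolding Q_def by simp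
      then show ?thesis using bdry_block_edges_KI[OF ref P] by simp
    qed
    have "v0 \<notin> Q" using Q(1) part v0_notin partition_onD1 by blast
    then show "bdry (KI_edges p j v0) (block_edges Q) = (Q - {j 1, v0}) \<union> ({j 1, v0} - Q)"
      using bdry_block_edges_KI[OF ref Q(1)] Q(2) by auto
    show "\<not> conn (KI_edges p j v0) (block_edges Q) (j 1) v0"
    proof (rule not_conn_across_isolated_edge[OF _ incident_KI_v0 _ _ block_edges_subset])
      show "incident (KI_edges p j v0) (j 2) = {0}" using incident_KI_j[of 2] p_pos by simp
      show "KI_edges p j v0 ! 0 = (j 2, v0)" by (simp add: KI_edges_eq)
      have "j 1 \<noteq> j 2" using j_eq_iff[of 1 2] p_pos by simp
      then show "j 1 \<in> {j 2, v0} \<longleftrightarrow> v0 \<notin> {j 2, v0}" using \<open>j 1 \<in> J\<close> v0_notin by auto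
    qed
  qed simp
qed

theorem Rsum_KI: "Rsum p J (j 1) v0 (KI_edges p j v0) = (if p = 1 then 1 else 0)"
proof -
  have "admissible PP Q \<longleftrightarrow> PP \<in> {PP. refines J (pair_block ` {1..p}) PP} \<and> Q = block_of PP (j 1)"
    for PP Q using admissible_KI_refines refines_admissible_KI by blast
  then have "Rsum p J (j 1) v0 (KI_edges p j v0)
      = (\<Sum>PP | refines J (pair_block ` {1..p}) PP. mobius_weight (card PP))"
    by (rule Rsum_eq_sum_admissible)
  also have "\<dots> = (if p = 1 then 1 else 0)"
    using sum_mobius_weight_coarsenings[OF partition_on_pairs] card_pair_blocks[of 1] p_pos by simp
  finally show ?thesis .
qed

end

section \<open>The graph $\mathcal K^{II}_p$\<close>

locale KII_graph = vertex_labelling p j for p and j :: "nat \<Rightarrow> 'v" +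
  fixes u0 v0 :: 'v
  assumes p_pos: "1 \<le> p" and u0_notin: "u0 \<notin> J" and v0_notin: "v0 \<notin> J" and u0_ne_v0: "u0 \<noteq> v0"
begin

definition pv :: "nat \<Rightarrow> 'v" where "pv e = (if e = 0 then j 1 else j (2*e))"

lemma KII_edges_eq: "KII_edges p j u0 v0 = (j 1, u0) # (j 2, v0) # pairs_from j 2 p"
  by (simp add: KII_edges_def)

lemma length_KII_edges: "length (KII_edges p j u0 v0) = p + 1"
  using p_pos by (simp add: KII_edges_eq)

lemma incident_KII:
  "incident (KII_edges p j u0 v0) v =
     (if j 1 = v \<or> u0 = v then insert 0 else id) (Suc ` (if j 2 = v \<or> v0 = v then insert 0 else id)
        (Suc ` (\<lambda>q. q - 2) ` {q \<in> {2..p}. v \<in> pair_block q}))"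
  by (simp add: KII_edges_eq incident_Cons incident_pairs_from)

lemma incident_KII_j:
  assumes "k \<in> {1..2*p}"
  shows "incident (KII_edges p j u0 v0) (j k) = {if k = 1 then 0 else (k + 1) div 2}"
proof -
  have "j k \<noteq> u0" "j k \<noteq> v0" using assms u0_notin v0_notin by blast+
  moreover have "j 1 = j k \<longleftrightarrow> k = 1" "j 2 = j k \<longleftrightarrow> k = 2"
    using j_eq_iff[of 1 k] j_eq_iff[of 2 k] assms p_pos by auto
  moreover have "{q \<in> {2..p}. j k \<in> pair_block q} = (if 2 \<le> (k + 1) div 2 then {(k + 1) div 2} else {})"
    using pair_blocks_containing[OF assms] by simp
  ultimately have incident: "incident (KII_edges p j u0 v0) (j k) =
      (if k = 1 then insert 0 else id) (Suc ` (if k = 2 then insert 0 else id)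
        (Suc ` (\<lambda>q. q - 2) ` (if 2 \<le> (k + 1) div 2 then {(k + 1) div 2} else {})))"
    unfolding incident_KII by simp
  consider "k = 1" | "k = 2" | "3 \<le> k" using assms by force
  then show ?thesis
  proof cases
    case 3
    then have "2 \<le> (k + 1) div 2" by simp
    then show ?thesis using 3 unfolding incident by simp
  qed (use incident in simp_all)
qed

lemma incident_KII_u0: "incident (KII_edges p j u0 v0) u0 = {0}"
proof -
  have no_pair: "{q \<in> {2..p}. u0 \<in> pair_block q} = {}"
    by (rule pair_blocks_containing_outside[OF u0_notin]) simp
  have "j 2 \<noteq> u0" using u0_notin p_pos by auto
  then show ?thesis unfolding incident_KII no_pair using u0_ne_v0 by simp
qed

lemma incident_KII_v0: "incident (KII_edges p j u0 v0) v0 = {1}"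
proof -
  have no_pair: "{q \<in> {2..p}. v0 \<in> pair_block q} = {}"
    by (rule pair_blocks_containing_outside[OF v0_notin]) simp
  have "j 1 \<noteq> v0" using v0_notin p_pos by auto
  then show ?thesis unfolding incident_KII no_pair using u0_ne_v0 by simp
qed

lemma incident_KII_outside:
  assumes "v \<notin> J" "v \<noteq> u0" "v \<noteq> v0"
  shows "incident (KII_edges p j u0 v0) v = {}"
proof -
  have "j 1 \<noteq> v" "j 2 \<noteq> v" using assms(1) p_pos by auto
  moreover have "{q \<in> {2..p}. v \<in> pair_block q} = {}" by (rule pair_blocks_containing_outside[OF assms(1)]) simp
  ultimately show ?thesis using assms(2,3) unfolding incident_KII by simp
qed

sublocale private_vertices J u0 v0 "KII_edges p j u0 v0" pv
proof
  show "loopless (KII_edges p j u0 v0)"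
    using loopless_pairs_from u0_notin v0_notin p_pos by (auto simp: KII_edges_eq)
  fix e assume e: "e < length (KII_edges p j u0 v0)"
  define k where "k = (if e = 0 then 1 else 2*e)"
  have k: "k \<in> {1..2*p}" "pv e = j k" using e length_KII_edges p_pos unfolding k_def pv_def by auto
  then show "pv e \<in> J" by blast
  show "pv e \<noteq> u0 \<and> pv e \<noteq> v0" using k u0_notin v0_notin by auto
  have "(if k = 1 then 0 else (k + 1) div 2) = e" unfolding k_def by auto
  then show "incident (KII_edges p j u0 v0) (pv e) = {e}"
    using incident_KII_j[OF k(1)] k(2) by simp
qed

lemma bdry_KII_j:
  assumes "k \<in> {1..2*p}"
  shows "j k \<in> bdry (KII_edges p j u0 v0) (block_edges P) \<longleftrightarrow>
    (if k = 1 then j 1 else j (2 * ((k + 1) div 2))) \<in> P"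
proof -
  have "(2::nat) div 2 \<le> (k + 1) div 2" using assms by (intro div_le_mono) auto
  then show ?thesis
    using mem_bdry_block_edges_single[OF incident_KII_j[OF assms]] unfolding pv_def by auto
qed

lemma bdry_KII_u0: "u0 \<in> bdry (KII_edges p j u0 v0) (block_edges P) \<longleftrightarrow> j 1 \<in> P"
  using mem_bdry_block_edges_single[OF incident_KII_u0] by (simp add: pv_def)

lemma bdry_KII_v0: "v0 \<in> bdry (KII_edges p j u0 v0) (block_edges P) \<longleftrightarrow> j 2 \<in> P"
  using mem_bdry_block_edges_single[OF incident_KII_v0] by (simp add: pv_def)

lemma bdry_KII_outside:
  "v \<notin> J \<Longrightarrow> v \<noteq> u0 \<Longrightarrow> v \<noteq> v0 \<Longrightarrow> v \<notin> bdry (KII_edges p j u0 v0) (block_edges P)"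
  using incident_KII_outside mem_bdry_block_edges_empty by blast

lemma admissible_KII_refines:
  assumes adm: "admissible PP Q"
  shows "refines J (pair_block ` {1..p}) PP" and "Q = block_of PP (j 1)"
proof -
  have part: "partition_on J PP" and "Q \<in> PP"
    using adm unfolding admissible_def by simp_all
  have "u0 \<notin> Q" "v0 \<notin> Q" using \<open>Q \<in> PP\<close> part u0_notin v0_notin partition_onD1 by blast+
  then have "u0 \<in> bdry (KII_edges p j u0 v0) (block_edges Q)" "v0 \<in> bdry (KII_edges p j u0 v0) (block_edges Q)"
    using admissible_bdry_blocks(2)[OF adm] by blast+
  then have "j 1 \<in> Q" "j 2 \<in> Q" using bdry_KII_u0 bdry_KII_v0 by blast+
  then show "Q = block_of PP (j 1)" using block_of_eq[OF part \<open>Q \<in> PP\<close>] by simp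
  have "\<exists>P\<in>PP. pair_block q \<subseteq> P" if q: "q \<in> {1..p}" for q
  proof (cases "q = 1")
    case True
    then show ?thesis using \<open>j 1 \<in> Q\<close> \<open>j 2 \<in> Q\<close> \<open>Q \<in> PP\<close> unfolding pair_block_def by auto
  next
    case False
    have k: "2*q - 1 \<in> {1..2*p}" "2*q \<in> {1..2*p}" using q by auto
    obtain P where P: "P \<in> PP" "j (2*q) \<in> P" using block_of[OF part j_in_J[OF k(2)]] by blast
    have "(2*q - 1 + 1) div 2 = q" "2*q - 1 \<noteq> 1" using q False by auto
    then have "j (2*q - 1) \<in> bdry (KII_edges p j u0 v0) (block_edges P)"
      using bdry_KII_j[OF k(1)] P(2) by simp
    moreover have "j (2*q - 1) \<noteq> u0" "j (2*q - 1) \<noteq> v0"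
      using j_in_J[OF k(1)] u0_notin v0_notin by auto
    ultimately have "j (2*q - 1) \<in> P" using admissible_mem_bdry_imp_mem[OF adm P(1)] by blast
    then show ?thesis using P unfolding pair_block_def by blast
  qed
  then show "refines J (pair_block ` {1..p}) PP"
    using refines_cover_iff[OF partition_on_pairs] part by blast
qed

lemma bdry_block_edges_KII:
  assumes ref: "refines J (pair_block ` {1..p}) PP" and P: "P \<in> PP"
  shows "bdry (KII_edges p j u0 v0) (block_edges P) = P \<union> (if j 1 \<in> P then {u0, v0} else {})"
proof (rule set_eqI)
  fix v
  have PJ: "P \<subseteq> J" using ref P unfolding refines_def partition_on_def by blast
  then have "u0 \<notin> P" "v0 \<notin> P" using u0_notin v0_notin by blast+
  consider "v = u0" | "v = v0" | k where "k \<in> {1..2*p}" "v = j k" | "v \<notin> J" "v \<noteq> u0" "v \<noteq> v0"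
    by blast
  then show "v \<in> bdry (KII_edges p j u0 v0) (block_edges P) \<longleftrightarrow> v \<in> P \<union> (if j 1 \<in> P then {u0, v0} else {})"
  proof cases
    case 1
    then show ?thesis using bdry_KII_u0 \<open>u0 \<notin> P\<close> by simp
  next
    case 2
    have "j 1 \<in> P \<longleftrightarrow> j 2 \<in> P" using refines_pairs_same_block[OF ref P, of 1] p_pos by simp
    then show ?thesis using 2 bdry_KII_v0 \<open>v0 \<notin> P\<close> u0_ne_v0 by simp
  next
    case (3 k)
    have "v \<noteq> u0" "v \<noteq> v0" using 3 u0_notin v0_notin by blast+
    moreover have "j k \<in> bdry (KII_edges p j u0 v0) (block_edges P) \<longleftrightarrow> j k \<in> P"
      using bdry_KII_j[OF 3(1)] refines_pairs_same_block[OF ref P 3(1)] by (cases "k = 1") simp_all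
    ultimately show ?thesis using 3(2) by simp
  next
    case 4
    then have "v \<notin> P" "v \<notin> bdry (KII_edges p j u0 v0) (block_edges P)"
      using bdry_KII_outside PJ by blast+
    then show ?thesis using 4 by simp
  qed
qed

lemma refines_admissible_KII:
  assumes ref: "refines J (pair_block ` {1..p}) PP"
  shows "admissible PP (block_of PP (j 1))"
proof -
  define Q where "Q = block_of PP (j 1)"
  have part: "partition_on J PP" using ref unfolding refines_def by blast
  have "j 1 \<in> J" using p_pos by auto
  then have Q: "Q \<in> PP" "j 1 \<in> Q" using block_of[OF part] unfolding Q_def by auto
  show ?thesis unfolding Q_def[symmetric]
  proof (rule admissibleI[OF ref _ _ Q(1)])
    show "even (card u)" if "u \<in> pair_block ` {1..p}" for u using that card_pair_block by auto
    show "bdry (KII_edges p j u0 v0) (block_edges P) = P" if P: "P \<in> PP" and "P \<noteq> Q" for P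
    proof -
      have "j 1 \<notin> P" using mem_iff_block_of_eq[OF part \<open>j 1 \<in> J\<close> P] \<open>P \<noteq> Q\<close> unfolding Q_def by simp
      then show ?thesis using bdry_block_edges_KII[OF ref P] by simp
    qed
    have "u0 \<notin> Q" "v0 \<notin> Q" using Q(1) part u0_notin v0_notin partition_onD1 by blast+
    then show "bdry (KII_edges p j u0 v0) (block_edges Q) = (Q - {u0, v0}) \<union> ({u0, v0} - Q)"
      using bdry_block_edges_KII[OF ref Q(1)] Q(2) by auto
    have "KII_edges p j u0 v0 ! 1 = (j 2, v0)" by (simp add: KII_edges_eq)
    moreover have "incident (KII_edges p j u0 v0) (j 2) = {1}" using incident_KII_j[of 2] p_pos by simp
    moreover have "j 2 \<noteq> u0" using u0_notin p_pos by auto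
    ultimately show "\<not> conn (KII_edges p j u0 v0) (block_edges Q) u0 v0"
      using not_conn_across_isolated_edge[OF _ incident_KII_v0 _ _ block_edges_subset] u0_ne_v0 by simp
  qed simp
qed

theorem Rsum_KII: "Rsum p J u0 v0 (KII_edges p j u0 v0) = (if p = 1 then 1 else 0)"
proof -
  have "admissible PP Q \<longleftrightarrow> PP \<in> {PP. refines J (pair_block ` {1..p}) PP} \<and> Q = block_of PP (j 1)"
    for PP Q using admissible_KII_refines refines_admissible_KII by blast
  then have "Rsum p J u0 v0 (KII_edges p j u0 v0)
      = (\<Sum>PP | refines J (pair_block ` {1..p}) PP. mobius_weight (card PP))"
    by (rule Rsum_eq_sum_admissible)
  also have "\<dots> = (if p = 1 then 1 else 0)"
    using sum_mobius_weight_coarsenings[OF partition_on_pairs] card_pair_blocks[of 1] p_pos by simp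
  finally show ?thesis .
qed

end

section \<open>The graph $\mathcal H_p$\<close>

locale H_graph = vertex_labelling p j for p and j :: "nat \<Rightarrow> 'v" +
  fixes v0 :: 'v
  assumes p_ge_2: "2 \<le> p" and v0_notin: "v0 \<notin> J"
begin

definition pv :: "nat \<Rightarrow> 'v" where "pv e = (if e = 0 then j 2 else if e = 1 then j 3 else j (2*e))"

lemma H_edges_eq: "H_edges p j v0 = (j 1, j 2) # (j 1, j 3) # (j 4, v0) # pairs_from j 3 p"
  by (simp add: H_edges_def)

lemma length_H_edges: "length (H_edges p j v0) = p + 1"
  using p_ge_2 by (simp add: H_edges_eq)

lemma j_small_distinct: "j 1 \<noteq> j 2" "j 1 \<noteq> j 3" "j 1 \<noteq> j 4" "j 2 \<noteq> j 3" "j 2 \<noteq> j 4" "j 3 \<noteq> j 4"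
  using j_eq_iff[of 1 2] j_eq_iff[of 1 3] j_eq_iff[of 1 4] j_eq_iff[of 2 3] j_eq_iff[of 2 4] j_eq_iff[of 3 4]
    p_ge_2 by auto

lemma incident_H:
  "incident (H_edges p j v0) v =
     (if j 1 = v \<or> j 2 = v then insert 0 else id) (Suc ` (if j 1 = v \<or> j 3 = v then insert 0 else id)
       (Suc ` (if j 4 = v \<or> v0 = v then insert 0 else id) (Suc ` (\<lambda>q. q - 3) ` {q \<in> {3..p}. v \<in> pair_block q})))"
  by (simp add: H_edges_eq incident_Cons incident_pairs_from)

lemma incident_H_j:
  assumes "k \<in> {1..2*p}"
  shows "incident (H_edges p j v0) (j k) =
    (if k = 1 then {0, 1} else if k \<le> 4 then {k - 2} else {(k + 1) div 2})"
proof -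
  have "j k \<noteq> v0" using assms v0_notin by blast
  moreover have "j i = j k \<longleftrightarrow> k = i" if "i \<in> {1, 2, 3, 4}" for i
    using j_eq_iff[of i k] assms p_ge_2 that by auto
  moreover have "{q \<in> {3..p}. j k \<in> pair_block q} = (if 3 \<le> (k + 1) div 2 then {(k + 1) div 2} else {})"
    using pair_blocks_containing[OF assms] by simp
  ultimately have incident: "incident (H_edges p j v0) (j k) =
     (if k = 1 \<or> k = 2 then insert 0 else id) (Suc ` (if k = 1 \<or> k = 3 then insert 0 else id)
       (Suc ` (if k = 4 then insert 0 else id)
         (Suc ` (\<lambda>q. q - 3) ` (if 3 \<le> (k + 1) div 2 then {(k + 1) div 2} else {}))))"
    unfolding incident_H by simp
  consider "k = 1" | "k = 2" | "k = 3" | "k = 4" | "5 \<le> k" using assms by force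
  then show ?thesis
  proof cases
    case 5
    then have "3 \<le> (k + 1) div 2" by simp
    then show ?thesis using 5 incident by simp
  qed (use incident in simp_all)
qed

lemma incident_H_v0: "incident (H_edges p j v0) v0 = {2}"
proof -
  have no_pair: "{q \<in> {3..p}. v0 \<in> pair_block q} = {}"
    by (rule pair_blocks_containing_outside[OF v0_notin]) simp
  have "j i \<noteq> v0" if "i \<in> {1, 2, 3, 4}" for i using j_in_J[of i] v0_notin p_ge_2 that by auto
  then show ?thesis unfolding incident_H no_pair by simp
qed

lemma incident_H_outside:
  assumes "v \<notin> J" "v \<noteq> v0"
  shows "incident (H_edges p j v0) v = {}"
proof -
  have "j i \<noteq> v" if "i \<in> {1, 2, 3, 4}" for i using j_in_J[of i] assms(1) p_ge_2 that by auto
  moreover have "{q \<in> {3..p}. v \<in> pair_block q} = {}" by (rule pair_blocks_containing_outside[OF assms(1)]) simp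
  ultimately show ?thesis using assms(2) unfolding incident_H by simp
qed

sublocale private_vertices J "j 1" v0 "H_edges p j v0" pv
proof
  have "j 4 \<noteq> v0" using j_in_J[of 4] v0_notin p_ge_2 by auto
  then show "loopless (H_edges p j v0)"
    using loopless_pairs_from[of 3] j_small_distinct by (simp add: H_edges_eq)
  fix e assume e: "e < length (H_edges p j v0)"
  define k where "k = (if e = 0 then 2 else if e = 1 then 3 else 2*e)"
  have "2 \<le> k" "k \<le> 2*p" using e length_H_edges p_ge_2 unfolding k_def by auto
  then have k: "k \<in> {1..2*p}" "k \<noteq> 1" by auto
  have pv: "pv e = j k" unfolding k_def pv_def by simp
  show "pv e \<in> J" unfolding pv using j_in_J[OF k(1)] .
  show "pv e \<noteq> j 1 \<and> pv e \<noteq> v0"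
    unfolding pv using j_eq_iff[OF k(1), of 1] k j_in_J[OF k(1)] v0_notin by auto
  have "(if k = 1 then {0, 1} else if k \<le> 4 then {k - 2} else {(k + 1) div 2}) = {e}"
    unfolding k_def by auto
  then show "incident (H_edges p j v0) (pv e) = {e}"
    unfolding pv using incident_H_j[OF k(1)] by simp
qed

lemma bdry_H_j1: "j 1 \<in> bdry (H_edges p j v0) (block_edges P) \<longleftrightarrow> (j 2 \<in> P \<longleftrightarrow> j 3 \<notin> P)"
proof -
  have "{e \<in> incident (H_edges p j v0) (j 1). pv e \<in> P} =
      (if j 2 \<in> P then {0} else {}) \<union> (if j 3 \<in> P then {1} else {})"
    using incident_H_j[of 1] p_ge_2 unfolding pv_def by auto
  then show ?thesis by (simp add: mem_bdry_block_edges_iff)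
qed

lemma bdry_H_j:
  assumes "k \<in> {2..2*p}"
  shows "j k \<in> bdry (H_edges p j v0) (block_edges P) \<longleftrightarrow>
    (if k \<le> 4 then j k else j (2 * ((k + 1) div 2))) \<in> P"
proof -
  have k: "k \<in> {1..2*p}" "k \<noteq> 1" using assms by auto
  show ?thesis
  proof (cases "k \<le> 4")
    case True
    then have "k = 2 \<or> k = 3 \<or> k = 4" using k by auto
    then have "pv (k - 2) = j k" unfolding pv_def by auto
    moreover have "incident (H_edges p j v0) (j k) = {k - 2}" using incident_H_j[OF k(1)] k True by simp
    ultimately show ?thesis using mem_bdry_block_edges_single True by simp
  next
    case False
    then have "(6::nat) div 2 \<le> (k + 1) div 2" by (intro div_le_mono) simp
    then have "pv ((k + 1) div 2) = j (2 * ((k + 1) div 2))" unfolding pv_def by auto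
    moreover have "incident (H_edges p j v0) (j k) = {(k + 1) div 2}"
      using incident_H_j[OF k(1)] k False by simp
    ultimately show ?thesis using mem_bdry_block_edges_single False by simp
  qed
qed

lemma bdry_H_v0: "v0 \<in> bdry (H_edges p j v0) (block_edges P) \<longleftrightarrow> j 4 \<in> P"
  using mem_bdry_block_edges_single[OF incident_H_v0] by (simp add: pv_def)

lemma bdry_H_outside: "v \<notin> J \<Longrightarrow> v \<noteq> v0 \<Longrightarrow> v \<notin> bdry (H_edges p j v0) (block_edges P)"
  using incident_H_outside mem_bdry_block_edges_empty by blast

definition outer_pairs :: "'v set set" where
  "outer_pairs = pair_block ` {3..p}"

definition core :: "'v set" where
  "core = {j 1, j 2, j 3, j 4}"

lemma core_subset: "core \<subseteq> J"
  using p_ge_2 unfolding core_def by auto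

lemma J_minus_core: "J - core = j ` {5..2*p}"
proof -
  have "{1..4::nat} = {1, 2, 3, 4}" by auto
  then have "core = j ` {1..4}" unfolding core_def by simp
  moreover have "{1..2*p} - {1..4} = {5..2*p}" by auto
  ultimately show ?thesis
    using inj_on_image_set_diff[OF inj, of "{1..2*p}" "{1..4}"] p_ge_2 by auto
qed

lemma partition_on_outer_pairs: "partition_on (J - core) outer_pairs"
  using partition_on_pair_blocks[of 3] unfolding J_minus_core outer_pairs_def by simp

lemma card_outer_pairs: "card outer_pairs = p - 2"
  using card_pair_blocks[of 3] unfolding outer_pairs_def by simp

lemma core_part_not_outer:
  assumes "A \<subseteq> core" "A \<noteq> {}"
  shows "disjnt A (\<Union> outer_pairs)" and "A \<notin> outer_pairs"
proof -
  have "\<Union> outer_pairs = J - core" using partition_on_outer_pairs partition_onD1 by blast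
  then show "disjnt A (\<Union> outer_pairs)" using assms(1) unfolding disjnt_def by blast
  then show "A \<notin> outer_pairs" using assms(2) unfolding disjnt_def by blast
qed

lemma partition_on_insert_core_part:
  assumes "partition_on (J - core \<union> B) V" "A \<subseteq> core" "A \<noteq> {}" "disjnt A (\<Union> V)" "A \<inter> B = {}"
  shows "partition_on (J - core \<union> A \<union> B) (insert A V)"
proof -
  have "J - core \<union> A \<union> B - A = J - core \<union> B" using assms(2,5) by blast
  then show ?thesis using assms by (subst partition_on_insert) auto
qed

definition pairing :: "'v set \<Rightarrow> 'v set \<Rightarrow> 'v set set" where
  "pairing A B = insert A (insert B outer_pairs)"

lemma partition_on_pairing:
  assumes "A \<union> B = core" "A \<inter> B = {}" "A \<noteq> {}" "B \<noteq> {}"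
  shows "partition_on J (pairing A B)" and "card (pairing A B) = p"
proof -
  have AB: "A \<subseteq> core" "B \<subseteq> core" using assms(1) by auto
  have "partition_on (J - core \<union> {} \<union> B) (insert B outer_pairs)"
    using partition_on_insert_core_part[of "{}" outer_pairs B] partition_on_outer_pairs
      core_part_not_outer(1)[OF AB(2) assms(4)] AB(2) assms(4) by simp
  moreover have "disjnt A (\<Union> (insert B outer_pairs))"
    using core_part_not_outer(1)[OF AB(1) assms(3)] assms(2) unfolding disjnt_def by auto
  ultimately have "partition_on (J - core \<union> A \<union> B) (pairing A B)"
    using partition_on_insert_core_part[of B "insert B outer_pairs" A] AB(1) assms(2,3)
    unfolding pairing_def by (simp add: Un_commute)
  moreover have "J - core \<union> A \<union> B = J" using assms(1) core_subset by blast
  ultimately show "partition_on J (pairing A B)" by simp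
  have "A \<noteq> B" using assms(2,3) by blast
  then show "card (pairing A B) = p"
    using core_part_not_outer(2)[OF AB(1) assms(3)] core_part_not_outer(2)[OF AB(2) assms(4)]
      card_outer_pairs p_ge_2 unfolding pairing_def outer_pairs_def by (simp add: card_insert_if)
qed

lemma partition_on_core_outer_pairs:
  shows "partition_on J (insert core outer_pairs)" and "card (insert core outer_pairs) = p - 1"
proof -
  have "core \<noteq> {}" unfolding core_def by simp
  have "partition_on (J - core \<union> core \<union> {}) (insert core outer_pairs)"
    using partition_on_insert_core_part[of "{}" outer_pairs core] partition_on_outer_pairs
      core_part_not_outer(1)[OF order.refl \<open>core \<noteq> {}\<close>] \<open>core \<noteq> {}\<close> by simp
  moreover have "J - core \<union> core \<union> {} = J" using core_subset by blast
  ultimately show "partition_on J (insert core outer_pairs)" by simp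
  show "card (insert core outer_pairs) = p - 1"
    using core_part_not_outer(2)[OF order.refl \<open>core \<noteq> {}\<close>] card_outer_pairs p_ge_2
    unfolding outer_pairs_def by (simp add: card_insert_if)
qed

lemma j_core: "j 1 \<in> core" "j 2 \<in> core" "j 3 \<in> core" "j 4 \<in> core"
  unfolding core_def by simp_all

lemma refines_pairing_iff:
  assumes "{x, y} \<union> {z, w} = core" "{x, y} \<inter> {z, w} = {}"
  shows "refines J (pairing {x, y} {z, w}) PP \<longleftrightarrow> partition_on J PP \<and>
    block_of PP x = block_of PP y \<and> block_of PP z = block_of PP w \<and> (\<forall>u\<in>outer_pairs. \<exists>P\<in>PP. u \<subseteq> P)"
proof -
  have "refines J (pairing {x, y} {z, w}) PP \<longleftrightarrow>
      partition_on J PP \<and> (\<forall>u\<in>pairing {x, y} {z, w}. \<exists>P\<in>PP. u \<subseteq> P)"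
    by (rule refines_cover_iff[OF partition_on_pairing(1)[OF assms]]) simp_all
  also have "\<dots> \<longleftrightarrow> partition_on J PP \<and> (\<exists>P\<in>PP. {x, y} \<subseteq> P) \<and> (\<exists>P\<in>PP. {z, w} \<subseteq> P) \<and>
      (\<forall>u\<in>outer_pairs. \<exists>P\<in>PP. u \<subseteq> P)"
    unfolding pairing_def by simp
  also have "\<dots> \<longleftrightarrow> partition_on J PP \<and>
      block_of PP x = block_of PP y \<and> block_of PP z = block_of PP w \<and> (\<forall>u\<in>outer_pairs. \<exists>P\<in>PP. u \<subseteq> P)"
  proof (cases "partition_on J PP")
    case True
    have "x \<in> J" "y \<in> J" "z \<in> J" "w \<in> J" using assms(1) core_subset by blast+
    then show ?thesis using block_of_eq_iff[OF True] by simp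
  qed simp
  finally show ?thesis .
qed

lemma refines_core_iff:
  "refines J (insert core outer_pairs) PP \<longleftrightarrow> partition_on J PP \<and>
    block_of PP (j 1) = block_of PP (j 2) \<and> block_of PP (j 2) = block_of PP (j 3) \<and>
    block_of PP (j 3) = block_of PP (j 4) \<and> (\<forall>u\<in>outer_pairs. \<exists>P\<in>PP. u \<subseteq> P)"
proof (cases "partition_on J PP")
  case part: True
  have "(\<exists>P\<in>PP. core \<subseteq> P) \<longleftrightarrow> block_of PP (j 1) = block_of PP (j 2) \<and>
      block_of PP (j 2) = block_of PP (j 3) \<and> block_of PP (j 3) = block_of PP (j 4)"
  proof
    assume "\<exists>P\<in>PP. core \<subseteq> P"
    then obtain P where P: "P \<in> PP" "core \<subseteq> P" by blast
    then have "block_of PP (j i) = P" if "i \<in> {1, 2, 3, 4}" for i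
      using block_of_eq[OF part P(1)] j_core that by auto
    then show "block_of PP (j 1) = block_of PP (j 2) \<and>
      block_of PP (j 2) = block_of PP (j 3) \<and> block_of PP (j 3) = block_of PP (j 4)" by simp
  next
    assume eq: "block_of PP (j 1) = block_of PP (j 2) \<and>
      block_of PP (j 2) = block_of PP (j 3) \<and> block_of PP (j 3) = block_of PP (j 4)"
    have "j i \<in> block_of PP (j i)" if "i \<in> {1, 2, 3, 4}" for i
      using block_of(2)[OF part] core_subset j_core that by auto
    then have "core \<subseteq> block_of PP (j 1)" using eq unfolding core_def by auto
    moreover have "block_of PP (j 1) \<in> PP" using block_of(1)[OF part] core_subset j_core by auto
    ultimately show "\<exists>P\<in>PP. core \<subseteq> P" by blast
  qed
  moreover have "refines J (insert core outer_pairs) PP \<longleftrightarrow>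
      (\<exists>P\<in>PP. core \<subseteq> P) \<and> (\<forall>u\<in>outer_pairs. \<exists>P\<in>PP. u \<subseteq> P)"
    using refines_cover_iff[OF partition_on_core_outer_pairs(1)] part by simp
  ultimately show ?thesis using part by simp
next
  case False
  then show ?thesis unfolding refines_def by simp
qed

lemma admissible_H_root:
  assumes adm: "admissible PP Q"
  shows "j 4 \<in> Q"
proof -
  have part: "partition_on J PP" using adm unfolding admissible_def by simp
  obtain P where P: "P \<in> PP" "j 4 \<in> P" using block_of[OF part j_in_J[of 4]] p_ge_2 by auto
  then have "v0 \<in> bdry (H_edges p j v0) (block_edges P)" using bdry_H_v0 by simp
  then have "P = Q" using admissible_mem_bdry_outside[OF adm P(1)] v0_notin by blast
  then show ?thesis using P by simp
qed

lemma admissible_H_cover: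
  assumes adm: "admissible PP Q"
  shows "\<forall>u\<in>outer_pairs. \<exists>P\<in>PP. u \<subseteq> P"
proof
  fix u assume "u \<in> outer_pairs"
  then obtain q where q: "q \<in> {3..p}" "u = pair_block q" unfolding outer_pairs_def by blast
  have k: "2*q - 1 \<in> {2..2*p}" "2*q \<in> {1..2*p}" using q(1) by auto
  have part: "partition_on J PP" using adm unfolding admissible_def by simp
  obtain P where P: "P \<in> PP" "j (2*q) \<in> P" using block_of[OF part j_in_J[OF k(2)]] by blast
  have "(2*q - 1 + 1) div 2 = q" "\<not> 2*q - 1 \<le> 4" using q(1) by auto
  then have "j (2*q - 1) \<in> bdry (H_edges p j v0) (block_edges P)"
    using bdry_H_j[OF k(1)] P(2) by simp
  moreover have "j (2*q - 1) \<noteq> j 1" "j (2*q - 1) \<noteq> v0"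
    using j_eq_iff[of "2*q - 1" 1] j_in_J[of "2*q - 1"] k(1) v0_notin by auto
  ultimately have "j (2*q - 1) \<in> P" using admissible_mem_bdry_imp_mem[OF adm P(1)] by blast
  then show "\<exists>P\<in>PP. u \<subseteq> P" using P q(2) unfolding pair_block_def by blast
qed

lemma admissible_H_parity:
  assumes adm: "admissible PP Q"
  shows "\<forall>P\<in>PP. (j 1 \<in> P \<longleftrightarrow> j 4 \<in> P) \<longleftrightarrow> (j 2 \<in> P \<longleftrightarrow> j 3 \<in> P)"
proof
  fix P assume P: "P \<in> PP"
  have part: "partition_on J PP" and "Q \<in> PP" using adm unfolding admissible_def by simp_all
  show "(j 1 \<in> P \<longleftrightarrow> j 4 \<in> P) \<longleftrightarrow> (j 2 \<in> P \<longleftrightarrow> j 3 \<in> P)"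
  proof (cases "P = Q")
    case True
    have "j 1 \<in> bdry (H_edges p j v0) (block_edges Q) \<longleftrightarrow> j 1 \<notin> Q"
      using admissible_bdry_blocks(2)[OF adm] by blast
    then show ?thesis using bdry_H_j1[of Q] admissible_H_root[OF adm] True by blast
  next
    case False
    have "j 4 \<notin> P"
      using partition_on_block_unique[OF part P \<open>Q \<in> PP\<close>, of "j 4"] admissible_H_root[OF adm] False
      by blast
    moreover have "j 1 \<in> bdry (H_edges p j v0) (block_edges P) \<longleftrightarrow> j 1 \<in> P"
      using admissible_bdry_blocks(1)[OF adm P False] by simp
    ultimately show ?thesis using bdry_H_j1[of P] by blast
  qed
qed

lemma pairings_cover_core:
  "{j 1, j 4} \<union> {j 2, j 3} = core" "{j 1, j 4} \<inter> {j 2, j 3} = {}"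
  "{j 2, j 4} \<union> {j 1, j 3} = core" "{j 2, j 4} \<inter> {j 1, j 3} = {}"
  "{j 3, j 4} \<union> {j 1, j 2} = core" "{j 3, j 4} \<inter> {j 1, j 2} = {}"
  using j_small_distinct unfolding core_def by auto

lemma parity_iff_refines_pairing:
  assumes part: "partition_on J PP" and cover: "\<forall>u\<in>outer_pairs. \<exists>P\<in>PP. u \<subseteq> P"
  shows "(\<forall>P\<in>PP. (j 1 \<in> P \<longleftrightarrow> j 4 \<in> P) \<longleftrightarrow> (j 2 \<in> P \<longleftrightarrow> j 3 \<in> P)) \<longleftrightarrow>
    refines J (pairing {j 1, j 4} {j 2, j 3}) PP \<or> refines J (pairing {j 2, j 4} {j 1, j 3}) PP \<or>
    refines J (pairing {j 3, j 4} {j 1, j 2}) PP"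
proof -
  have in_J: "j i \<in> J" if "i \<in> {1, 2, 3, 4}" for i using core_subset j_core that by auto
  let ?B = "\<lambda>i. block_of PP (j i)"
  have "(\<forall>P\<in>PP. (j 1 \<in> P \<longleftrightarrow> j 4 \<in> P) \<longleftrightarrow> (j 2 \<in> P \<longleftrightarrow> j 3 \<in> P)) \<longleftrightarrow>
      (\<forall>P\<in>PP. (?B 1 = P \<longleftrightarrow> ?B 4 = P) \<longleftrightarrow> (?B 2 = P \<longleftrightarrow> ?B 3 = P))"
    using mem_iff_block_of_eq[OF part in_J] by simp
  also have "\<dots> \<longleftrightarrow> (?B 1 = ?B 4 \<and> ?B 2 = ?B 3) \<or> (?B 2 = ?B 4 \<and> ?B 1 = ?B 3) \<or> (?B 3 = ?B 4 \<and> ?B 1 = ?B 2)"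
    using block_of(1)[OF part in_J] by (intro four_blocks_parity_iff) simp_all
  also have "\<dots> \<longleftrightarrow> refines J (pairing {j 1, j 4} {j 2, j 3}) PP \<or> refines J (pairing {j 2, j 4} {j 1, j 3}) PP \<or>
      refines J (pairing {j 3, j 4} {j 1, j 2}) PP"
    unfolding refines_pairing_iff[OF pairings_cover_core(1,2)] refines_pairing_iff[OF pairings_cover_core(3,4)]
      refines_pairing_iff[OF pairings_cover_core(5,6)]
    using part cover by simp
  finally show ?thesis .
qed

lemma refines_some_pairing:
  assumes "refines J (pairing {j 1, j 4} {j 2, j 3}) PP \<or> refines J (pairing {j 2, j 4} {j 1, j 3}) PP \<or>
    refines J (pairing {j 3, j 4} {j 1, j 2}) PP"
  obtains x y z w where "refines J (pairing {x, y} {z, w}) PP"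
    and "{x, y} \<union> {z, w} = core" "{x, y} \<inter> {z, w} = {}" "x \<noteq> y" "z \<noteq> w"
proof -
  from assms consider "refines J (pairing {j 1, j 4} {j 2, j 3}) PP" | "refines J (pairing {j 2, j 4} {j 1, j 3}) PP"
    | "refines J (pairing {j 3, j 4} {j 1, j 2}) PP" by blast
  then show thesis
  proof cases
    case 1
    show thesis by (rule that[OF 1 pairings_cover_core(1,2)]) (use j_small_distinct in auto)
  next
    case 2
    show thesis by (rule that[OF 2 pairings_cover_core(3,4)]) (use j_small_distinct in auto)
  next
    case 3
    show thesis by (rule that[OF 3 pairings_cover_core(5,6)]) (use j_small_distinct in auto)
  qed
qed

lemma even_card_pairing: "x \<noteq> y \<Longrightarrow> z \<noteq> w \<Longrightarrow> u \<in> pairing {x, y} {z, w} \<Longrightarrow> even (card u)"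
  using card_pair_block unfolding pairing_def outer_pairs_def by auto

lemma bdry_block_edges_H:
  assumes part: "partition_on J PP" and cover: "\<forall>u\<in>outer_pairs. \<exists>P\<in>PP. u \<subseteq> P"
    and parity: "\<forall>P\<in>PP. (j 1 \<in> P \<longleftrightarrow> j 4 \<in> P) \<longleftrightarrow> (j 2 \<in> P \<longleftrightarrow> j 3 \<in> P)" and P: "P \<in> PP"
  shows "bdry (H_edges p j v0) (block_edges P) = (if j 4 \<in> P then (P - {j 1, v0}) \<union> ({j 1, v0} - P) else P)"
proof (rule set_eqI)
  fix v
  have PJ: "P \<subseteq> J" using part P partition_onD1 by blast
  then have "v0 \<notin> P" using v0_notin by blast
  have "v = j 1 \<or> v = v0 \<or> (\<exists>k\<in>{2..2*p}. v = j k) \<or> (v \<notin> J \<and> v \<noteq> v0)"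
  proof (cases "v \<in> J")
    case True
    then obtain k where "k \<in> {1..2*p}" "v = j k" by blast
    then show ?thesis by (cases "k = 1") auto
  qed auto
  then consider "v = j 1" | "v = v0" | k where "k \<in> {2..2*p}" "v = j k" | "v \<notin> J" "v \<noteq> v0"
    by blast
  then show "v \<in> bdry (H_edges p j v0) (block_edges P) \<longleftrightarrow>
      v \<in> (if j 4 \<in> P then (P - {j 1, v0}) \<union> ({j 1, v0} - P) else P)"
  proof cases
    case 1
    have "j 1 \<noteq> v0" using j_in_J[of 1] v0_notin p_ge_2 by auto
    then show ?thesis using 1 bdry_H_j1[of P] parity P by auto
  next
    case 2
    then show ?thesis using bdry_H_v0 \<open>v0 \<notin> P\<close> by auto
  next
    case (3 k)
    have "j k \<noteq> j 1" "j k \<noteq> v0" using j_eq_iff[of k 1] 3(1) j_in_J[of k] v0_notin by auto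
    moreover have "j k \<in> P \<longleftrightarrow> j (2 * ((k + 1) div 2)) \<in> P" if "5 \<le> k"
    proof -
      have "(k + 1) div 2 \<in> {3..p}" "k \<in> {1..2*p}" using that 3(1) by auto
      moreover from this(1) have "\<exists>P'\<in>PP. pair_block ((k + 1) div 2) \<subseteq> P'"
        using cover unfolding outer_pairs_def by blast
      ultimately show ?thesis using pair_block_same_block[OF part _ P] by blast
    qed
    then have "j k \<in> bdry (H_edges p j v0) (block_edges P) \<longleftrightarrow> j k \<in> P"
      using bdry_H_j[OF 3(1)] by (cases "k \<le> 4") auto
    ultimately show ?thesis using 3(2) by simp
  next
    case 4
    then have "v \<notin> P" "v \<notin> bdry (H_edges p j v0) (block_edges P)"
      using bdry_H_outside PJ by blast+
    then show ?thesis using 4 j_in_J[of 1] p_ge_2 by auto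
  qed
qed

lemma refines_pairing_admissible_H:
  assumes ref: "refines J (pairing {j 1, j 4} {j 2, j 3}) PP \<or> refines J (pairing {j 2, j 4} {j 1, j 3}) PP \<or>
    refines J (pairing {j 3, j 4} {j 1, j 2}) PP"
  shows "admissible PP (block_of PP (j 4))"
proof -
  define Q where "Q = block_of PP (j 4)"
  obtain x y z w where U: "refines J (pairing {x, y} {z, w}) PP"
    and xyzw: "{x, y} \<union> {z, w} = core" "{x, y} \<inter> {z, w} = {}" "x \<noteq> y" "z \<noteq> w"
    using refines_some_pairing[OF ref] by blast
  have part: "partition_on J PP" and cover: "\<forall>u\<in>outer_pairs. \<exists>P\<in>PP. u \<subseteq> P"
    using U unfolding refines_pairing_iff[OF xyzw(1,2)] by simp_all
  have parity: "\<forall>P\<in>PP. (j 1 \<in> P \<longleftrightarrow> j 4 \<in> P) \<longleftrightarrow> (j 2 \<in> P \<longleftrightarrow> j 3 \<in> P)"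
    using parity_iff_refines_pairing[OF part cover] ref by blast
  have Q: "Q \<in> PP" "j 4 \<in> Q" using block_of[OF part j_in_J[of 4]] p_ge_2 unfolding Q_def by auto
  note bdry_block = bdry_block_edges_H[OF part cover parity]
  show ?thesis unfolding Q_def[symmetric]
  proof (rule admissibleI[OF U _ even_card_pairing[OF xyzw(3,4)] Q(1)])
    show "bdry (H_edges p j v0) (block_edges P) = P" if P: "P \<in> PP" and "P \<noteq> Q" for P
    proof -
      have "j 4 \<notin> P" using mem_iff_block_of_eq[OF part j_in_J[of 4] P] p_ge_2 \<open>P \<noteq> Q\<close>
        unfolding Q_def by simp
      then show ?thesis using bdry_block[OF P] by simp
    qed
    show "bdry (H_edges p j v0) (block_edges Q) = (Q - {j 1, v0}) \<union> ({j 1, v0} - Q)"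
      using bdry_block[OF Q(1)] Q(2) by simp
    have "H_edges p j v0 ! 2 = (j 4, v0)" by (simp add: H_edges_eq numeral_eq_Suc)
    moreover have "incident (H_edges p j v0) (j 4) = {2}" using incident_H_j[of 4] p_ge_2 by simp
    moreover have "j 1 \<noteq> j 4" "j 1 \<noteq> v0" using j_small_distinct j_in_J[of 1] v0_notin p_ge_2 by auto
    ultimately show "\<not> conn (H_edges p j v0) (block_edges Q) (j 1) v0"
      using not_conn_across_isolated_edge[OF _ incident_H_v0 _ _ block_edges_subset] by simp
  qed simp
qed

lemma admissible_H_iff:
  "admissible PP Q \<longleftrightarrow>
    (refines J (pairing {j 1, j 4} {j 2, j 3}) PP \<or> refines J (pairing {j 2, j 4} {j 1, j 3}) PP \<or>
     refines J (pairing {j 3, j 4} {j 1, j 2}) PP) \<and> Q = block_of PP (j 4)"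
proof
  assume adm: "admissible PP Q"
  have part: "partition_on J PP" and "Q \<in> PP" using adm unfolding admissible_def by simp_all
  then have "Q = block_of PP (j 4)" using block_of_eq[OF part \<open>Q \<in> PP\<close> admissible_H_root[OF adm]] by simp
  then show "(refines J (pairing {j 1, j 4} {j 2, j 3}) PP \<or> refines J (pairing {j 2, j 4} {j 1, j 3}) PP \<or>
     refines J (pairing {j 3, j 4} {j 1, j 2}) PP) \<and> Q = block_of PP (j 4)"
    using parity_iff_refines_pairing[OF part admissible_H_cover[OF adm]] admissible_H_parity[OF adm]
    by simp
next
  assume "(refines J (pairing {j 1, j 4} {j 2, j 3}) PP \<or> refines J (pairing {j 2, j 4} {j 1, j 3}) PP \<or>
     refines J (pairing {j 3, j 4} {j 1, j 2}) PP) \<and> Q = block_of PP (j 4)"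
  then show "admissible PP Q" using refines_pairing_admissible_H by simp
qed

lemma coarsenings_pairings_inter:
  shows "{PP. refines J (pairing {j 1, j 4} {j 2, j 3}) PP} \<inter> {PP. refines J (pairing {j 2, j 4} {j 1, j 3}) PP}
     = {PP. refines J (insert core outer_pairs) PP}" (is ?thesis1)
  and "({PP. refines J (pairing {j 1, j 4} {j 2, j 3}) PP} \<union> {PP. refines J (pairing {j 2, j 4} {j 1, j 3}) PP})
     \<inter> {PP. refines J (pairing {j 3, j 4} {j 1, j 2}) PP} = {PP. refines J (insert core outer_pairs) PP}"
    (is ?thesis2)
proof -
  note iffs = refines_pairing_iff[OF pairings_cover_core(1,2)] refines_pairing_iff[OF pairings_cover_core(3,4)]
    refines_pairing_iff[OF pairings_cover_core(5,6)] refines_core_iff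
  show ?thesis1 unfolding iffs by (rule set_eqI) auto
  show ?thesis2 unfolding iffs by (rule set_eqI) auto
qed

theorem Rsum_H: "Rsum p J (j 1) v0 (H_edges p j v0) = (if p = 2 then -2 else 0)"
proof -
  define S where "S = (\<lambda>C :: 'v set set set. \<Sum>PP\<in>C. mobius_weight (card PP))"
  define C where "C = (\<lambda>U. {PP. refines J U PP})"
  let ?C1 = "C (pairing {j 1, j 4} {j 2, j 3})" and ?C2 = "C (pairing {j 2, j 4} {j 1, j 3})"
    and ?C3 = "C (pairing {j 3, j 4} {j 1, j 2})" and ?C0 = "C (insert core outer_pairs)"
  have fin: "finite (C U)" for U
    using finitely_many_partition_on[of J] unfolding C_def refines_def
    by (rule finite_subset[rotated]) auto
  have S_pairing: "S (C (pairing A B)) = 0" if "A \<union> B = core" "A \<inter> B = {}" "A \<noteq> {}" "B \<noteq> {}" for A B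
    using sum_mobius_weight_coarsenings[OF partition_on_pairing(1)[OF that]] partition_on_pairing(2)[OF that]
      p_ge_2 unfolding S_def C_def by simp
  have S_core: "S ?C0 = (if p = 2 then 1 else 0)"
    using sum_mobius_weight_coarsenings[OF partition_on_core_outer_pairs(1)] partition_on_core_outer_pairs(2)
      p_ge_2 unfolding S_def C_def by auto
  have inter: "?C1 \<inter> ?C2 = ?C0" "(?C1 \<union> ?C2) \<inter> ?C3 = ?C0"
    unfolding C_def by (fact coarsenings_pairings_inter(1), fact coarsenings_pairings_inter(2))
  have "admissible PP Q \<longleftrightarrow> PP \<in> ?C1 \<union> ?C2 \<union> ?C3 \<and> Q = block_of PP (j 4)" for PP Q
    unfolding C_def using admissible_H_iff by simp
  then have "Rsum p J (j 1) v0 (H_edges p j v0) = S (?C1 \<union> ?C2 \<union> ?C3)"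
    unfolding S_def by (rule Rsum_eq_sum_admissible)
  moreover have "S (?C1 \<union> ?C2 \<union> ?C3) + S ?C0 = S (?C1 \<union> ?C2) + S ?C3"
    unfolding S_def inter(2)[symmetric] by (rule sum.union_inter[OF finite_UnI[OF fin fin] fin])
  moreover have "S (?C1 \<union> ?C2) + S ?C0 = S ?C1 + S ?C2"
    unfolding S_def inter(1)[symmetric] by (rule sum.union_inter[OF fin fin])
  moreover have "S ?C1 = 0" "S ?C2 = 0" "S ?C3 = 0"
    using S_pairing[OF pairings_cover_core(1,2)] S_pairing[OF pairings_cover_core(3,4)]
      S_pairing[OF pairings_cover_core(5,6)] by simp_all
  ultimately have "Rsum p J (j 1) v0 (H_edges p j v0) = - 2 * S ?C0" by linarith
  then show ?thesis using S_core by simp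
qed

end

theorem mainTheorem10:
  fixes j :: "nat \<Rightarrow> 'v" and u0 v0 :: 'v and p :: nat
  assumes "1 \<le> p"
    and "inj_on j {1..2*p}"
    and "v0 \<notin> j ` {1..2*p}"
  shows "Rsum p (j ` {1..2*p}) (j 1) v0 (KI_edges p j v0) = (if p = 1 then 1 else 0)
    \<and> (u0 \<notin> j ` {1..2*p} \<and> u0 \<noteq> v0 \<longrightarrow>
         Rsum p (j ` {1..2*p}) u0 v0 (KII_edges p j u0 v0) = (if p = 1 then 1 else 0))
    \<and> (2 \<le> p \<longrightarrow> Rsum p (j ` {1..2*p}) (j 1) v0 (H_edges p j v0) = (if p = 2 then -2 else 0))"
proof (intro conjI impI)
  have "KI_graph p j v0" by unfold_locales (use assms in auto)
  then show "Rsum p (j ` {1..2*p}) (j 1) v0 (KI_edges p j v0) = (if p = 1 then 1 else 0)"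
    by (rule KI_graph.Rsum_KI)
next
  assume "u0 \<notin> j ` {1..2*p} \<and> u0 \<noteq> v0"
  then have "KII_graph p j u0 v0" by unfold_locales (use assms in auto)
  then show "Rsum p (j ` {1..2*p}) u0 v0 (KII_edges p j u0 v0) = (if p = 1 then 1 else 0)"
    by (rule KII_graph.Rsum_KII)
next
  assume "2 \<le> p"
  then have "H_graph p j v0" by unfold_locales (use assms in auto)
  then show "Rsum p (j ` {1..2*p}) (j 1) v0 (H_edges p j v0) = (if p = 2 then -2 else 0)"
    by (rule H_graph.Rsum_H)
qed

end
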